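(* For every $\lambda>0$ there is $C(\lambda)<\infty$ such that the following holds. Let $\Lambda'\subset\Lambda$ be rectangles such that the Euclidean distance from $\Lambda'$ to $\mathbb{R}^2\setminus\Lambda$ is at least $2$, and let $f:\Omega\to[0,\infty)$ be a measurable $\Lambda'$-local function. Then $$\mu_{\Lambda'}(f)\le C(\lambda)^{\mathrm{Perimeter}(\Lambda)}\,\mu_\Lambda(f),$$ where $\mu_\Lambda$ may be any of $\mu^{\mathrm{per}}_{\Lambda,\lambda}$, $\mu^\rho_{\Lambda,\lambda}$ for some $\rho\in\Omega$, or an infinite-volume Gibbs measure at fugacity $\lambda$, and independently $\mu_{\Lambda'}$ may be any of $\mu^{\mathrm{per}}_{\Lambda',\lambda}$, $\mu^{\rho'}_{\Lambda',\lambda}$ for some $\rho'\in\Omega$, or an infinite-volume Gibbs measure at fugacity $\lambda$.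
   Context: Tiles: $T_{(x,y)}=[x-1,x+1]\times[y-1,y+1]$. $\Omega=\{\sigma\in\{0,1\}^{\mathbb{Z}^2}: \sigma(u)=\sigma(v)=1,u\ne v\Rightarrow\mathrm{int}(T_u)\cap\mathrm{int}(T_v)=\emptyset\}$. A rectangle is a closed axis-parallel rectangle with integer corner coordinates; $R_{K\times L,(x,y)}=[x,x+K]\times[y,y+L]$, with width $K$, height $L$, perimeter $2K+2L$. A face is a unit square $[a,a+1]\times[b,b+1]$, $a,b\in\mathbb{Z}$; it is vacant in $\sigma$ if it is contained in no tile of $\sigma$. For a rectangle $\Lambda$, $w_{\Lambda,\lambda}(\sigma)=\lambda^{-\frac14\#\{\text{vacant faces } f\subset\Lambda\}}$. $\Omega^{\mathrm{per}}_\Lambda=\{\sigma\in\Omega:\sigma(v)=\sigma(v+(\mathrm{Width}(\Lambda),0))=\sigma(v+(0,\mathrm{Height}(\Lambda)))\ \forall v\}$; for $\rho\in\Omega$, $\Omega^\rho_\Lambda=\{\sigma\in\Omega:\sigma=\rho\text{ on }\mathbb{Z}^2\setminus\mathrm{int}(\Lambda)\}$. For $*\in\{\mathrm{per}\}\cup\Omega$, $\mu^*_{\Lambda,\lambda}(\sigma)=w_{\Lambda,\lambda}(\sigma)/Z^*_{\Lambda,\lambda}$ on $\Omega^*_\Lambda$, $Z^*_{\Lambda,\lambda}=\sum_{\sigma\in\Omega^*_\Lambda}w_{\Lambda,\lambda}(\sigma)$. A Gibbs measure at fugacity $\lambda$ is a probability measure $\mu$ on $\Omega$ such that for every bounded $\Lambda\subset\mathbb{R}^2$,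 conditionally on $\sigma|_{\mathbb{Z}^2\setminus\mathrm{int}\Lambda}$ the law of $\sigma\sim\mu$ is the measure on $\Omega^\sigma_\Lambda$ proportional to $\lambda^{\#\{\text{tiles centered in }\mathrm{int}\Lambda\}}$. A function $f$ on $\Omega$ is $A$-local ($A\subset\mathbb{R}^2$) if $f(\sigma)$ depends only on the restriction of $\sigma$ to $A\cap\mathbb{Z}^2$. *)

theory Defs
  imports "HOL-Probability.Probability"
begin

type_synonym site = "int \<times> int"
type_synonym config = "site \<Rightarrow> bool"

definition pt :: "site \<Rightarrow> real \<times> real" where
  "pt v = (real_of_int (fst v), real_of_int (snd v))"

definition tile :: "site \<Rightarrow> (real \<times> real) set" where
  "tile u = {real_of_int (fst u) - 1 .. real_of_int (fst u) + 1} \<times>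
            {real_of_int (snd u) - 1 .. real_of_int (snd u) + 1}"

definition Omega :: "config set" where
  "Omega = {\<sigma>. \<forall>u v. \<sigma> u \<and> \<sigma> v \<and> u \<noteq> v \<longrightarrow> interior (tile u) \<inter> interior (tile v) = {}}"

text \<open>Rectangle R = (x, y, K, L) stands for [x,x+K] x [y,y+L]; widths and heights positive.\<close>
type_synonym rect = "int \<times> int \<times> int \<times> int"

definition is_rect :: "rect \<Rightarrow> bool" where
  "is_rect R = (case R of (x, y, K, L) \<Rightarrow> 0 < K \<and> 0 < L)"

definition rect_set :: "rect \<Rightarrow> (real \<times> real) set" where
  "rect_set R = (case R of (x, y, K, L) \<Rightarrow>
     {real_of_int x .. real_of_int (x + K)} \<times> {real_of_int y .. real_of_int (y + L)})"

definition width :: "rect \<Rightarrow> int" where "width R = fst (snd (snd R))"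
definition height :: "rect \<Rightarrow> int" where "height R = snd (snd (snd R))"
definition perimeter :: "rect \<Rightarrow> int" where "perimeter R = 2 * width R + 2 * height R"

definition face :: "site \<Rightarrow> (real \<times> real) set" where
  "face f = {real_of_int (fst f) .. real_of_int (fst f) + 1} \<times>
            {real_of_int (snd f) .. real_of_int (snd f) + 1}"

definition vacant :: "config \<Rightarrow> site \<Rightarrow> bool" where
  "vacant \<sigma> f = (\<not> (\<exists>u. \<sigma> u \<and> face f \<subseteq> tile u))"

definition weight :: "real \<Rightarrow> rect \<Rightarrow> config \<Rightarrow> real" where
  "weight lam R \<sigma> = lam powr (- (1/4) * real (card {f. face f \<subseteq> rect_set R \<and> vacant \<sigma> f}))"

definition Omega_per :: "rect \<Rightarrow> config set" where
  "Omega_per R = {\<sigma> \<in> Omega. \<forall>v. \<sigma> v = \<sigma> (fst v + width R, snd v) \<and> \<sigma> v = \<sigma> (fst v, snd v + height R)}"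

definition Omega_bc :: "(real \<times> real) set \<Rightarrow> config \<Rightarrow> config set" where
  "Omega_bc A \<rho> = {\<sigma> \<in> Omega. \<forall>v. pt v \<notin> interior A \<longrightarrow> \<sigma> v = \<rho> v}"

definition wmean :: "(config \<Rightarrow> real) \<Rightarrow> config set \<Rightarrow> (config \<Rightarrow> real) \<Rightarrow> real" where
  "wmean w S f = (\<Sum>\<sigma>\<in>S. w \<sigma> * f \<sigma>) / (\<Sum>\<sigma>\<in>S. w \<sigma>)"

definition per_mean :: "real \<Rightarrow> rect \<Rightarrow> (config \<Rightarrow> real) \<Rightarrow> real" where
  "per_mean lam R f = wmean (weight lam R) (Omega_per R) f"

definition bc_mean :: "real \<Rightarrow> rect \<Rightarrow> config \<Rightarrow> (config \<Rightarrow> real) \<Rightarrow> real" where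
  "bc_mean lam R \<rho> f = wmean (weight lam R) (Omega_bc (rect_set R) \<rho>) f"

definition cfg_space :: "config measure" where
  "cfg_space = PiM UNIV (\<lambda>_. count_space UNIV)"

definition spec :: "real \<Rightarrow> (real \<times> real) set \<Rightarrow> config \<Rightarrow> config set \<Rightarrow> real" where
  "spec lam A \<sigma> E = wmean (\<lambda>\<eta>. lam ^ card {v. \<eta> v \<and> pt v \<in> interior A})
                          (Omega_bc A \<sigma>) (indicator E)"

definition outside_event :: "(real \<times> real) set \<Rightarrow> config set \<Rightarrow> bool" where
  "outside_event A B = (B \<in> sets cfg_space \<and>
     (\<forall>\<sigma> \<tau>. (\<forall>v. pt v \<notin> interior A \<longrightarrow> \<sigma> v = \<tau> v) \<longrightarrow> (\<sigma> \<in> B \<longleftrightarrow> \<tau> \<in> B)))"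

definition gibbs :: "real \<Rightarrow> config measure \<Rightarrow> bool" where
  "gibbs lam \<mu> = (prob_space \<mu> \<and> sets \<mu> = sets cfg_space \<and> emeasure \<mu> Omega = 1 \<and>
     (\<forall>A. bounded A \<longrightarrow> (\<forall>E \<in> sets cfg_space. \<forall>B. outside_event A B \<longrightarrow>
        measure \<mu> (E \<inter> B) = (\<integral>\<sigma>. indicator B \<sigma> * spec lam A \<sigma> E \<partial>\<mu>))))"

definition is_local :: "(real \<times> real) set \<Rightarrow> (config \<Rightarrow> real) \<Rightarrow> bool" where
  "is_local A f = (\<forall>\<sigma>\<in>Omega. \<forall>\<tau>\<in>Omega. (\<forall>v. pt v \<in> A \<longrightarrow> \<sigma> v = \<tau> v) \<longrightarrow> f \<sigma> = f \<tau>)"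

definition admissible_means :: "real \<Rightarrow> rect \<Rightarrow> ((config \<Rightarrow> real) \<Rightarrow> real) set" where
  "admissible_means lam R =
     {per_mean lam R} \<union> {bc_mean lam R \<rho> | \<rho>. \<rho> \<in> Omega} \<union>
     {(\<lambda>f. \<integral>\<sigma>. f \<sigma> \<partial>\<mu>) | \<mu>. gibbs lam \<mu>}"

end

theory Submission
  imports Defs
begin

text \<open>
  Fixing the boundary values of a configuration on \<open>\<Lambda>\<close>, the number of vacant faces is an affine
  function of the number of tiles centred inside, so each boundary-condition measure is the hard-core
  measure with weight \<open>\<lambda> ^ #tiles\<close>. Every admissible measure is a mixture of these: the periodic
  measure, because the periodic configurations with given boundary values on \<open>\<Lambda>\<close> are exactly the
  periodizations of the configurations with that boundary condition; a Gibbs measure, by the DLR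
  equations on the events fixing the boundary values. It therefore suffices to compare the
  boundary-condition measures on \<open>\<Lambda>'\<close> and \<open>\<Lambda>\<close> for arbitrary boundary conditions. Given a pair
  \<open>(\<sigma>, \<tau>)\<close> of configurations in \<open>\<Lambda>\<close> and \<open>\<Lambda>'\<close>, move the \<open>\<Lambda>'\<close>-part of \<open>\<tau>\<close> into \<open>\<sigma>\<close> and the core of \<open>\<sigma>\<close>
  into \<open>\<tau>\<close>, emptying a collar of width two around \<open>\<partial>\<Lambda>'\<close>. This map changes the total tile count by at most
  twice the size of the collar and is at most \<open>2 ^ |collar|\<close>-to-one, and the collar has
  \<open>O(Perimeter(\<Lambda>))\<close> sites.
\<close>

section \<open>Sites, tiles and faces\<close>

definition rect_sites :: "rect \<Rightarrow> site set" where
  "rect_sites R = (case R of (x, y, K, L) \<Rightarrow>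
     {u. x \<le> fst u \<and> fst u \<le> x + K \<and> y \<le> snd u \<and> snd u \<le> y + L})"

definition inner_sites :: "rect \<Rightarrow> site set" where
  "inner_sites R = (case R of (x, y, K, L) \<Rightarrow>
     {u. x < fst u \<and> fst u < x + K \<and> y < snd u \<and> snd u < y + L})"

definition near :: "site \<Rightarrow> site \<Rightarrow> bool" where
  "near u v \<longleftrightarrow> \<bar>fst u - fst v\<bar> \<le> 1 \<and> \<bar>snd u - snd v\<bar> \<le> 1"

lemma near_sym: "near u v \<Longrightarrow> near v u"
  by (auto simp: near_def abs_minus_commute)

lemma pt_in_rect_set_iff: "pt v \<in> rect_set R \<longleftrightarrow> v \<in> rect_sites R"
  by (cases R; cases v) (auto simp: pt_def rect_set_def rect_sites_def)

lemma pt_in_interior_rect_set_iff: "pt v \<in> interior (rect_set R) \<longleftrightarrow> v \<in> inner_sites R"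
  by (cases R; cases v) (auto simp: pt_def rect_set_def interior_Times inner_sites_def)

lemma inner_sites_subset: "inner_sites R \<subseteq> rect_sites R"
  by (cases R) (auto simp: rect_sites_def inner_sites_def)

lemma finite_rect_sites: "finite (rect_sites R)"
proof (cases R)
  case (fields x y K L)
  then have "rect_sites R \<subseteq> {x..x+K} \<times> {y..y+L}" by (auto simp: rect_sites_def)
  then show ?thesis by (rule finite_subset) auto
qed

lemma finite_inner_sites: "finite (inner_sites R)"
  using finite_subset[OF inner_sites_subset finite_rect_sites] .

lemma near_inner_sites: "near u w \<Longrightarrow> u \<in> inner_sites R \<Longrightarrow> w \<in> rect_sites R"
  by (cases R) (auto simp: near_def inner_sites_def rect_sites_def)

lemma interior_tile: "interior (tile u) =
  {real_of_int (fst u) - 1<..<real_of_int (fst u) + 1} \<times> {real_of_int (snd u) - 1<..<real_of_int (snd u) + 1}"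
  by (simp add: tile_def interior_Times)

lemma tiles_disjoint_iff: "interior (tile u) \<inter> interior (tile v) = {} \<longleftrightarrow> \<not> near u v"
proof
  assume disj: "interior (tile u) \<inter> interior (tile v) = {}"
  show "\<not> near u v"
  proof
    assume "near u v"
    then have "\<bar>real_of_int (fst u) - real_of_int (fst v)\<bar> \<le> 1"
      "\<bar>real_of_int (snd u) - real_of_int (snd v)\<bar> \<le> 1"
      unfolding near_def by linarith+
    then have "((real_of_int (fst u) + real_of_int (fst v)) / 2, (real_of_int (snd u) + real_of_int (snd v)) / 2)
        \<in> interior (tile u) \<inter> interior (tile v)"
      unfolding interior_tile by (auto simp: abs_le_iff)
    with disj show False by blast
  qed
next
  assume "\<not> near u v"
  then have "\<bar>real_of_int (fst u) - real_of_int (fst v)\<bar> \<ge> 2 \<or> \<bar>real_of_int (snd u) - real_of_int (snd v)\<bar> \<ge> 2"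
    unfolding near_def by linarith
  then show "interior (tile u) \<inter> interior (tile v) = {}"
    unfolding interior_tile by (auto simp: abs_if split: if_splits)
qed

lemma Omega_iff: "\<sigma> \<in> Omega \<longleftrightarrow> (\<forall>u v. \<sigma> u \<and> \<sigma> v \<and> u \<noteq> v \<longrightarrow> \<not> near u v)"
  unfolding Omega_def tiles_disjoint_iff by simp

lemma Omega_bc_rect_iff:
  "\<sigma> \<in> Omega_bc (rect_set R) \<rho> \<longleftrightarrow> \<sigma> \<in> Omega \<and> (\<forall>v. v \<notin> inner_sites R \<longrightarrow> \<sigma> v = \<rho> v)"
  unfolding Omega_bc_def pt_in_interior_rect_set_iff by auto

lemma Omega_bc_subset: "Omega_bc A \<rho> \<subseteq> Omega"
  unfolding Omega_bc_def by blast

lemma self_in_Omega_bc: "\<rho> \<in> Omega \<Longrightarrow> \<rho> \<in> Omega_bc A \<rho>"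
  unfolding Omega_bc_def by auto

lemma finite_Omega_bc: "finite (Omega_bc (rect_set R) \<rho>)"
proof -
  let ?glue = "\<lambda>B u. if u \<in> inner_sites R then u \<in> B else \<rho> u"
  have "Omega_bc (rect_set R) \<rho> \<subseteq> ?glue ` Pow (inner_sites R)"
  proof
    fix \<sigma> assume "\<sigma> \<in> Omega_bc (rect_set R) \<rho>"
    then have "\<sigma> = ?glue {u \<in> inner_sites R. \<sigma> u}"
      unfolding Omega_bc_rect_iff by auto
    then show "\<sigma> \<in> ?glue ` Pow (inner_sites R)" by blast
  qed
  then show ?thesis by (rule finite_subset) (use finite_inner_sites in auto)
qed

definition face_corners :: "site \<Rightarrow> site set" where
  "face_corners F = {F, (fst F + 1, snd F), (fst F, snd F + 1), (fst F + 1, snd F + 1)}"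

lemma face_subset_tile_iff: "face F \<subseteq> tile u \<longleftrightarrow> u \<in> face_corners F"
proof -
  have "face F \<subseteq> tile u \<longleftrightarrow>
     (real_of_int (fst u) - 1 \<le> real_of_int (fst F) \<and> real_of_int (fst F) + 1 \<le> real_of_int (fst u) + 1) \<and>
     (real_of_int (snd u) - 1 \<le> real_of_int (snd F) \<and> real_of_int (snd F) + 1 \<le> real_of_int (snd u) + 1)"
    unfolding face_def tile_def times_subset_iff by auto
  also have "\<dots> \<longleftrightarrow> (fst u = fst F \<or> fst u = fst F + 1) \<and> (snd u = snd F \<or> snd u = snd F + 1)"
    by linarith
  also have "\<dots> \<longleftrightarrow> u \<in> face_corners F" by (cases u; cases F) (auto simp: face_corners_def)
  finally show ?thesis .
qed

lemma vacant_iff: "vacant \<sigma> F \<longleftrightarrow> (\<forall>u\<in>face_corners F. \<not> \<sigma> u)"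
  unfolding vacant_def face_subset_tile_iff by blast

lemma near_face_corners: "u \<in> face_corners F \<Longrightarrow> v \<in> face_corners F \<Longrightarrow> near u v"
  by (auto simp: face_corners_def near_def)

lemma face_subset_rect_set_iff: "face F \<subseteq> rect_set (x, y, K, L) \<longleftrightarrow>
   x \<le> fst F \<and> fst F + 1 \<le> x + K \<and> y \<le> snd F \<and> snd F + 1 \<le> y + L"
proof -
  have "face F \<subseteq> rect_set (x, y, K, L) \<longleftrightarrow>
     (real_of_int x \<le> real_of_int (fst F) \<and> real_of_int (fst F) + 1 \<le> real_of_int x + real_of_int K) \<and>
     (real_of_int y \<le> real_of_int (snd F) \<and> real_of_int (snd F) + 1 \<le> real_of_int y + real_of_int L)"
    by (simp add: face_def rect_set_def times_subset_iff del: of_int_le_iff)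
  also have "\<dots> \<longleftrightarrow> x \<le> fst F \<and> fst F + 1 \<le> x + K \<and> y \<le> snd F \<and> snd F + 1 \<le> y + L"
    by linarith
  finally show ?thesis .
qed

definition rect_faces :: "rect \<Rightarrow> site set" where
  "rect_faces R = {F. face F \<subseteq> rect_set R}"

definition faces_at :: "rect \<Rightarrow> site \<Rightarrow> site set" where
  "faces_at R u = {F \<in> rect_faces R. u \<in> face_corners F}"

lemma finite_rect_faces: "finite (rect_faces R)"
proof (cases R)
  case (fields x y K L)
  then have "rect_faces R \<subseteq> {x..x+K} \<times> {y..y+L}" by (auto simp: rect_faces_def face_subset_rect_set_iff)
  then show ?thesis by (rule finite_subset) auto
qed

lemma finite_faces_at: "finite (faces_at R u)"
  using finite_rect_faces[of R] by (auto simp: faces_at_def)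

lemma card_faces_at_inner: "u \<in> inner_sites R \<Longrightarrow> card (faces_at R u) = 4"
proof -
  assume u: "u \<in> inner_sites R"
  obtain x y K L where R: "R = (x, y, K, L)" by (cases R)
  obtain a b where ab: "u = (a, b)" by (cases u)
  have "faces_at R u = {(a-1, b-1), (a-1, b), (a, b-1), (a, b)}"
    using u unfolding R ab faces_at_def rect_faces_def
    by (auto simp: face_subset_rect_set_iff face_corners_def inner_sites_def)
  then show ?thesis by simp
qed

lemma face_corners_subset_rect_sites: "F \<in> rect_faces R \<Longrightarrow> face_corners F \<subseteq> rect_sites R"
  by (cases R) (auto simp: rect_faces_def face_subset_rect_set_iff face_corners_def rect_sites_def)

lemma is_local_rect_iff: "is_local (rect_set R) f \<longleftrightarrow>
    (\<forall>\<sigma>\<in>Omega. \<forall>\<sigma>'\<in>Omega. (\<forall>u\<in>rect_sites R. \<sigma> u = \<sigma>' u) \<longrightarrow> f \<sigma> = f \<sigma>')"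
  unfolding is_local_def pt_in_rect_set_iff by blast

lemma is_local_rectD:
  "is_local (rect_set R) f \<Longrightarrow> \<sigma> \<in> Omega \<Longrightarrow> \<sigma>' \<in> Omega \<Longrightarrow> (\<And>u. u \<in> rect_sites R \<Longrightarrow> \<sigma> u = \<sigma>' u)
    \<Longrightarrow> f \<sigma> = f \<sigma>'"
  unfolding is_local_rect_iff by blast

lemma is_local_mono: "A \<subseteq> B \<Longrightarrow> is_local A f \<Longrightarrow> is_local B f"
  unfolding is_local_def by blast

definition outer_hard_core :: "rect \<Rightarrow> config set" where
  "outer_hard_core Q = {\<sigma>. \<forall>u v. u \<notin> inner_sites Q \<and> v \<notin> inner_sites Q \<and> u \<noteq> v \<and> near u v \<longrightarrow> \<not> (\<sigma> u \<and> \<sigma> v)}"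

lemma Omega_subset_outer_hard_core: "Omega \<subseteq> outer_hard_core Q"
  using Omega_iff unfolding outer_hard_core_def by blast

lemma replace_inside_in_Omega_bc:
  assumes \<sigma>': "\<sigma>' \<in> outer_hard_core Q" and \<eta>: "\<eta> \<in> Omega_bc (rect_set Q) \<sigma>"
    and bd: "\<forall>u\<in>rect_sites Q - inner_sites Q. \<sigma> u = \<sigma>' u"
  shows "(\<lambda>u. if u \<in> inner_sites Q then \<eta> u else \<sigma>' u) \<in> Omega_bc (rect_set Q) \<sigma>'"
proof -
  let ?\<phi> = "\<lambda>u. if u \<in> inner_sites Q then \<eta> u else \<sigma>' u"
  have "\<eta> \<in> Omega" and \<eta>_out: "\<And>v. v \<notin> inner_sites Q \<Longrightarrow> \<eta> v = \<sigma> v"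
    using \<eta> unfolding Omega_bc_rect_iff by auto
  have "?\<phi> \<in> Omega"
    unfolding Omega_iff
  proof (intro allI impI notI)
    fix u w assume occ: "?\<phi> u \<and> ?\<phi> w \<and> u \<noteq> w" and n: "near u w"
    show False
    proof (cases "u \<in> inner_sites Q \<or> w \<in> inner_sites Q")
      case True
      then have "u \<in> rect_sites Q" "w \<in> rect_sites Q"
        using near_inner_sites[OF n, of Q] near_inner_sites[OF near_sym[OF n], of Q]
          inner_sites_subset[of Q] by auto
      then have "\<eta> u" "\<eta> w" using occ bd \<eta>_out by (auto split: if_splits)
      then show False using \<open>\<eta> \<in> Omega\<close> occ n Omega_iff by metis
    next
      case False
      then have "\<sigma>' u" "\<sigma>' w" using occ by auto
      moreover have "\<forall>u v. u \<notin> inner_sites Q \<and> v \<notin> inner_sites Q \<and> u \<noteq> v \<and> near u v \<longrightarrow> \<not> (\<sigma>' u \<and> \<sigma>' v)"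
        using \<sigma>' unfolding outer_hard_core_def by blast
      ultimately show False using False occ n by blast
    qed
  qed
  then show ?thesis unfolding Omega_bc_rect_iff by simp
qed

section \<open>Weighted means and convex hulls\<close>

lemma wmean_scale:
  assumes "c \<noteq> 0" "\<And>x. x \<in> S \<Longrightarrow> w x = c * w' x"
  shows "wmean w S f = wmean w' S f"
proof -
  have "(\<Sum>x\<in>S. w x * f x) = c * (\<Sum>x\<in>S. w' x * f x)" "(\<Sum>x\<in>S. w x) = c * (\<Sum>x\<in>S. w' x)"
    using assms(2) by (simp_all add: sum_distrib_left mult.assoc)
  then show ?thesis using assms(1) unfolding wmean_def by simp
qed

lemma wmean_nonneg:
  "(\<And>x. x \<in> S \<Longrightarrow> w x \<ge> 0) \<Longrightarrow> (\<And>x. x \<in> S \<Longrightarrow> f x \<ge> 0) \<Longrightarrow> wmean w S f \<ge> 0"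
  unfolding wmean_def by (intro divide_nonneg_nonneg sum_nonneg mult_nonneg_nonneg) auto

lemma wmean_sum:
  assumes "finite V"
  shows "wmean w S (\<lambda>x. \<Sum>v\<in>V. c v * g v x) = (\<Sum>v\<in>V. c v * wmean w S (g v))"
proof -
  have "(\<Sum>x\<in>S. w x * (\<Sum>v\<in>V. c v * g v x)) = (\<Sum>v\<in>V. c v * (\<Sum>x\<in>S. w x * g v x))"
    by (simp add: sum_distrib_left mult_ac sum.swap[of _ S])
  then show ?thesis unfolding wmean_def by (simp add: sum_divide_distrib[symmetric] times_divide_eq_right)
qed

lemma wmean_in_convex_hull_fibres:
  fixes w f :: "config \<Rightarrow> real" and \<kappa> :: "config \<Rightarrow> 'b"
  assumes S: "finite S" "S \<noteq> {}" and w: "\<forall>x\<in>S. w x > 0"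
  shows "wmean w S f \<in> convex hull ((\<lambda>x. wmean w {y \<in> S. \<kappa> y = \<kappa> x} f) ` S)"
proof -
  define F where "F k = {y \<in> S. \<kappa> y = k}" for k
  define W where "W A = (\<Sum>y\<in>A. w y)" for A
  have W_pos: "W A > 0" if "A \<subseteq> S" "A \<noteq> {}" for A
    using that S w finite_subset unfolding W_def by (metis subset_eq sum_pos)
  have F_ne: "F k \<subseteq> S \<and> F k \<noteq> {}" if "k \<in> \<kappa> ` S" for k using that unfolding F_def by auto
  have WF: "W (F k) > 0" if "k \<in> \<kappa> ` S" for k using W_pos F_ne that by blast
  have WS: "W S > 0" using W_pos S(2) by blast
  have split: "(\<Sum>y\<in>S. g y) = (\<Sum>k\<in>\<kappa> ` S. \<Sum>y\<in>F k. g y)" for g :: "config \<Rightarrow> real"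
    unfolding F_def by (rule sum.image_gen[OF S(1)])
  have "wmean w S f = (\<Sum>k\<in>\<kappa> ` S. (\<Sum>y\<in>F k. w y * f y) / W S)"
    unfolding wmean_def split[of "\<lambda>y. w y * f y"] W_def[symmetric] by (rule sum_divide_distrib)
  also have "\<dots> = (\<Sum>k\<in>\<kappa> ` S. (W (F k) / W S) *\<^sub>R wmean w (F k) f)"
  proof (rule sum.cong[OF refl])
    fix k assume "k \<in> \<kappa> ` S"
    then have "W (F k) > 0" by (rule WF)
    then show "(\<Sum>y\<in>F k. w y * f y) / W S = (W (F k) / W S) *\<^sub>R wmean w (F k) f"
      unfolding wmean_def W_def[symmetric] by simp
  qed
  also have "\<dots> \<in> convex hull ((\<lambda>x. wmean w (F (\<kappa> x)) f) ` S)"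
  proof (rule convex_sum)
    show "(\<Sum>k\<in>\<kappa> ` S. W (F k) / W S) = 1"
      using W_pos[of S] S unfolding W_def split[of w] by (simp flip: sum_divide_distrib)
    show "0 \<le> W (F k) / W S" if "k \<in> \<kappa> ` S" for k
      using WF[OF that] WS by simp
    show "wmean w (F k) f \<in> convex hull ((\<lambda>x. wmean w (F (\<kappa> x)) f) ` S)" if "k \<in> \<kappa> ` S" for k
      using that by (auto intro: hull_inc)
  qed (use S in auto)
  finally show ?thesis unfolding F_def .
qed

lemma convex_hull_real_le:
  fixes x b :: real
  shows "x \<in> convex hull S \<Longrightarrow> (\<And>y. y \<in> S \<Longrightarrow> y \<le> b) \<Longrightarrow> x \<le> b"
  using hull_minimal[of S "{..b}" convex] by auto

lemma convex_hull_real_ge: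
  fixes x b :: real
  shows "x \<in> convex hull S \<Longrightarrow> (\<And>y. y \<in> S \<Longrightarrow> b \<le> y) \<Longrightarrow> b \<le> x"
  using hull_minimal[of S "{b..}" convex] by auto

lemma convex_hull_real_comparison:
  fixes x y c :: real
  assumes "x \<in> convex hull A" "y \<in> convex hull B" "c > 0" "\<And>a b. a \<in> A \<Longrightarrow> b \<in> B \<Longrightarrow> b \<le> c * a"
  shows "y \<le> c * x"
proof -
  have "y / c \<le> a" if "a \<in> A" for a
    using convex_hull_real_le[OF assms(2)] assms(3,4) that by (simp add: divide_le_eq mult.commute)
  then have "y / c \<le> x" by (rule convex_hull_real_ge[OF assms(1)])
  then show ?thesis using assms(3) by (simp add: divide_le_eq mult.commute)
qed

lemma sum_level_sets:
  fixes f :: "'a \<Rightarrow> real"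
  assumes "finite V" "f ` A \<subseteq> V" "x \<in> A"
  shows "(\<Sum>v\<in>V. v * indicator {y \<in> A. f y = v} x) = f x"
proof -
  have "(\<Sum>v\<in>V. v * indicator {y \<in> A. f y = v} x) = (\<Sum>v\<in>V. if v = f x then v else 0)"
    using assms(3) by (intro sum.cong) (auto simp: indicator_def)
  also have "\<dots> = f x" using assms by (auto simp: sum.delta')
  finally show ?thesis .
qed

section \<open>Reduction of the weight to a tile count\<close>

definition occupied :: "config \<Rightarrow> site set \<Rightarrow> nat" where
  "occupied \<eta> A = card {v \<in> A. \<eta> v}"

abbreviation inner_tiles :: "rect \<Rightarrow> config \<Rightarrow> nat" where
  "inner_tiles R \<eta> \<equiv> occupied \<eta> (inner_sites R)"

definition tile_mean :: "real \<Rightarrow> rect \<Rightarrow> config \<Rightarrow> (config \<Rightarrow> real) \<Rightarrow> real" where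
  "tile_mean lam R \<rho> f = wmean (\<lambda>\<eta>. lam ^ inner_tiles R \<eta>) (Omega_bc (rect_set R) \<rho>) f"

lemma spec_rect_eq_tile_mean: "spec lam (rect_set R) \<sigma> E = tile_mean lam R \<sigma> (indicator E)"
  unfolding spec_def tile_mean_def occupied_def pt_in_interior_rect_set_iff
  by (simp add: conj_commute)

text \<open>Faces covered by tiles centred on the boundary of \<open>R\<close>: fixed by the boundary condition.\<close>
definition boundary_covered_faces :: "rect \<Rightarrow> config \<Rightarrow> site set" where
  "boundary_covered_faces R \<rho> = (\<Union>u \<in> {u \<in> rect_sites R - inner_sites R. \<rho> u}. faces_at R u)"

lemma card_occupied_faces:
  assumes "\<sigma> \<in> Omega_bc (rect_set R) \<rho>"
  shows "card {F \<in> rect_faces R. \<not> vacant \<sigma> F} = 4 * inner_tiles R \<sigma> + card (boundary_covered_faces R \<rho>)"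
proof -
  let ?Ui = "{u \<in> inner_sites R. \<sigma> u}" and ?Ub = "{u \<in> rect_sites R - inner_sites R. \<sigma> u}"
  have \<sigma>: "\<sigma> \<in> Omega" "\<And>v. v \<notin> inner_sites R \<Longrightarrow> \<sigma> v = \<rho> v"
    using assms unfolding Omega_bc_rect_iff by auto
  have disj: "faces_at R u \<inter> faces_at R v = {}" if "\<sigma> u" "\<sigma> v" "u \<noteq> v" for u v
    using that \<sigma>(1) near_face_corners unfolding Omega_iff faces_at_def by blast
  have Ub: "{u \<in> rect_sites R - inner_sites R. \<rho> u} = ?Ub" using \<sigma>(2) by auto
  have "{F \<in> rect_faces R. \<not> vacant \<sigma> F} = (\<Union>u\<in>?Ui. faces_at R u) \<union> (\<Union>u\<in>?Ub. faces_at R u)"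
  proof (intro equalityI subsetI)
    fix F assume "F \<in> {F \<in> rect_faces R. \<not> vacant \<sigma> F}"
    then obtain u where "F \<in> faces_at R u" "\<sigma> u" by (auto simp: vacant_iff faces_at_def)
    moreover have "u \<in> rect_sites R"
      using \<open>F \<in> faces_at R u\<close> face_corners_subset_rect_sites unfolding faces_at_def by blast
    ultimately show "F \<in> (\<Union>u\<in>?Ui. faces_at R u) \<union> (\<Union>u\<in>?Ub. faces_at R u)" by blast
  qed (auto simp: vacant_iff faces_at_def)
  moreover have "card (\<Union>u\<in>?Ui. faces_at R u) = (\<Sum>u\<in>?Ui. card (faces_at R u))"
    by (rule card_UN_disjoint) (use finite_inner_sites finite_faces_at disj in auto)
  moreover have "(\<Sum>u\<in>?Ui. card (faces_at R u)) = 4 * inner_tiles R \<sigma>"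
    by (simp add: card_faces_at_inner occupied_def)
  moreover have "(\<Union>u\<in>?Ui. faces_at R u) \<inter> (\<Union>u\<in>?Ub. faces_at R u) = {}"
    using disj by fastforce
  ultimately show ?thesis
    unfolding boundary_covered_faces_def Ub
    by (simp add: card_Un_disjoint finite_faces_at finite_inner_sites finite_rect_sites)
qed

lemma card_vacant_faces:
  assumes "\<sigma> \<in> Omega_bc (rect_set R) \<rho>"
  shows "card {F. face F \<subseteq> rect_set R \<and> vacant \<sigma> F} + 4 * inner_tiles R \<sigma>
      + card (boundary_covered_faces R \<rho>) = card (rect_faces R)"
proof -
  have "card (rect_faces R) = card {F \<in> rect_faces R. vacant \<sigma> F} + card {F \<in> rect_faces R. \<not> vacant \<sigma> F}"
    using finite_rect_faces[of R] by (subst card_Un_disjoint[symmetric]) (auto intro: arg_cong[where f = card])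
  then show ?thesis using card_occupied_faces[OF assms] by (simp add: rect_faces_def)
qed

text \<open>Each inner tile covers exactly four faces of \<open>R\<close> and the faces covered by boundary tiles are fixed
  by \<open>\<rho>\<close>, so the weight is \<open>lam ^ inner_tiles\<close> up to a factor depending only on \<open>\<rho>\<close>.\<close>
lemma bc_mean_eq_tile_mean:
  assumes "lam > 0"
  shows "bc_mean lam R \<rho> f = tile_mean lam R \<rho> f"
  unfolding bc_mean_def tile_mean_def
proof (rule wmean_scale)
  let ?c = "lam powr (- (1/4) * (real (card (rect_faces R)) - real (card (boundary_covered_faces R \<rho>))))"
  show "?c \<noteq> 0" using assms by simp
  fix \<sigma> assume \<sigma>: "\<sigma> \<in> Omega_bc (rect_set R) \<rho>"
  have vacant: "real (card {F. face F \<subseteq> rect_set R \<and> vacant \<sigma> F}) = real (card (rect_faces R))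
      - real (card (boundary_covered_faces R \<rho>)) - 4 * real (inner_tiles R \<sigma>)"
    using card_vacant_faces[OF \<sigma>] by linarith
  then have "weight lam R \<sigma> = lam powr (- (1/4) * (real (card (rect_faces R))
      - real (card (boundary_covered_faces R \<rho>))) + real (inner_tiles R \<sigma>))"
    unfolding weight_def vacant by (simp add: algebra_simps)
  also have "\<dots> = ?c * lam ^ inner_tiles R \<sigma>"
    using assms by (simp only: powr_add powr_realpow)
  finally show "weight lam R \<sigma> = ?c * lam ^ inner_tiles R \<sigma>" .
qed

section \<open>Comparison of boundary conditions by a swap\<close>

definition has_margin :: "rect \<Rightarrow> rect \<Rightarrow> bool" where
  "has_margin R R' = (case R of (x, y, K, L) \<Rightarrow> case R' of (x', y', K', L') \<Rightarrow>
      x + 2 \<le> x' \<and> x' + K' + 2 \<le> x + K \<and> y + 2 \<le> y' \<and> y' + L' + 2 \<le> y + L)"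

definition core_sites :: "rect \<Rightarrow> site set" where
  "core_sites R = (case R of (x, y, K, L) \<Rightarrow>
     {u. x + 2 \<le> fst u \<and> fst u \<le> x + K - 2 \<and> y + 2 \<le> snd u \<and> snd u \<le> y + L - 2})"

definition enlarged_sites :: "rect \<Rightarrow> site set" where
  "enlarged_sites R = (case R of (x, y, K, L) \<Rightarrow>
     {u. x - 1 \<le> fst u \<and> fst u \<le> x + K + 1 \<and> y - 1 \<le> snd u \<and> snd u \<le> y + L + 1})"

definition collar :: "rect \<Rightarrow> site set" where
  "collar R = enlarged_sites R - core_sites R"

lemma core_sites_subset: "core_sites R \<subseteq> inner_sites R"
  by (cases R) (auto simp: core_sites_def inner_sites_def)

lemma rect_sites_subset_enlarged: "rect_sites R \<subseteq> enlarged_sites R"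
  by (cases R) (auto simp: rect_sites_def enlarged_sites_def)

lemma enlarged_sites_subset_inner: "has_margin R R' \<Longrightarrow> enlarged_sites R' \<subseteq> inner_sites R"
  by (cases R; cases R') (auto simp: enlarged_sites_def inner_sites_def has_margin_def)

lemma near_rect_sites: "near u w \<Longrightarrow> u \<in> rect_sites R \<Longrightarrow> w \<in> enlarged_sites R"
  by (cases R) (auto simp: near_def rect_sites_def enlarged_sites_def)

lemma near_core_sites: "near u w \<Longrightarrow> u \<in> core_sites R \<Longrightarrow> w \<in> inner_sites R"
  by (cases R) (auto simp: near_def core_sites_def inner_sites_def)

lemma finite_collar: "finite (collar R)"
proof (cases R)
  case (fields x y K L)
  then have "collar R \<subseteq> {x-1..x+K+1} \<times> {y-1..y+L+1}" by (auto simp: collar_def enlarged_sites_def)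
  then show ?thesis by (rule finite_subset) auto
qed

text \<open>Given \<open>\<sigma>\<close> with boundary condition for \<open>R\<close> and \<open>\<tau>\<close> with boundary condition for \<open>R'\<close>,
  the outer splice carries the \<open>R'\<close>-part of \<open>\<tau>\<close> into \<open>\<sigma>\<close> and the inner splice the core of \<open>\<sigma>\<close> into \<open>\<tau>\<close>;
  clearing the collar keeps both hard-core.\<close>
definition splice_outer :: "rect \<Rightarrow> config \<Rightarrow> config \<Rightarrow> config" where
  "splice_outer R' \<sigma> \<tau> = (\<lambda>u. if u \<in> rect_sites R' then \<tau> u else if u \<in> enlarged_sites R' then False else \<sigma> u)"

definition splice_inner :: "rect \<Rightarrow> config \<Rightarrow> config \<Rightarrow> config" where
  "splice_inner R' \<sigma> \<tau> = (\<lambda>u. if u \<in> core_sites R' then \<sigma> u else if u \<in> inner_sites R' then False else \<tau> u)"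

lemma splice_outer_outside: "v \<notin> enlarged_sites R' \<Longrightarrow> splice_outer R' \<sigma> \<tau> v = \<sigma> v"
  using rect_sites_subset_enlarged[of R'] by (auto simp: splice_outer_def)

lemma splice_outer_in_Omega_bc:
  assumes m: "has_margin R R'" and \<sigma>: "\<sigma> \<in> Omega_bc (rect_set R) \<rho>" and \<tau>: "\<tau> \<in> Omega"
  shows "splice_outer R' \<sigma> \<tau> \<in> Omega_bc (rect_set R) \<rho>"
proof -
  have "splice_outer R' \<sigma> \<tau> \<in> Omega"
    unfolding Omega_iff
  proof (intro allI impI notI)
    fix u w assume occ: "splice_outer R' \<sigma> \<tau> u \<and> splice_outer R' \<sigma> \<tau> w \<and> u \<noteq> w" and n: "near u w"
    consider "u \<in> rect_sites R'" "w \<in> rect_sites R'" | "u \<in> rect_sites R' \<or> w \<in> rect_sites R'" "\<not> (u \<in> rect_sites R' \<and> w \<in> rect_sites R')"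
      | "u \<notin> rect_sites R'" "w \<notin> rect_sites R'" by blast
    then show False
    proof cases
      case 1
      then have "\<tau> u" "\<tau> w" using occ by (simp_all add: splice_outer_def)
      then show False using occ \<tau> n Omega_iff by metis
    next
      case 2 then show False using occ near_rect_sites[OF n, of R'] near_rect_sites[OF near_sym[OF n], of R']
          unfolding splice_outer_def by auto
    next
      case 3
      then have "\<sigma> u" "\<sigma> w" using occ by (auto simp: splice_outer_def split: if_splits)
      then show False using occ \<sigma> n Omega_bc_rect_iff Omega_iff by metis
    qed
  qed
  moreover have "\<forall>v. v \<notin> inner_sites R \<longrightarrow> splice_outer R' \<sigma> \<tau> v = \<rho> v"
    using \<sigma> enlarged_sites_subset_inner[OF m] splice_outer_outside unfolding Omega_bc_rect_iff by blast
  ultimately show ?thesis unfolding Omega_bc_rect_iff by blast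
qed

lemma splice_inner_in_Omega_bc:
  assumes \<sigma>: "\<sigma> \<in> Omega" and \<tau>: "\<tau> \<in> Omega_bc (rect_set R') \<rho>"
  shows "splice_inner R' \<sigma> \<tau> \<in> Omega_bc (rect_set R') \<rho>"
proof -
  have "splice_inner R' \<sigma> \<tau> \<in> Omega"
    unfolding Omega_iff
  proof (intro allI impI notI)
    fix u w assume occ: "splice_inner R' \<sigma> \<tau> u \<and> splice_inner R' \<sigma> \<tau> w \<and> u \<noteq> w" and n: "near u w"
    consider "u \<in> core_sites R'" "w \<in> core_sites R'" | "u \<in> core_sites R' \<or> w \<in> core_sites R'" "\<not> (u \<in> core_sites R' \<and> w \<in> core_sites R')"
      | "u \<notin> core_sites R'" "w \<notin> core_sites R'" by blast
    then show False
    proof cases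
      case 1
      then have "\<sigma> u" "\<sigma> w" using occ by (simp_all add: splice_inner_def)
      then show False using occ \<sigma> n Omega_iff by metis
    next
      case 2 then show False using occ near_core_sites[OF n, of R'] near_core_sites[OF near_sym[OF n], of R']
          unfolding splice_inner_def by auto
    next
      case 3
      then have "\<tau> u" "\<tau> w" using occ by (auto simp: splice_inner_def split: if_splits)
      then show False using occ \<tau> n Omega_bc_rect_iff Omega_iff by metis
    qed
  qed
  moreover have "\<forall>v. v \<notin> inner_sites R' \<longrightarrow> splice_inner R' \<sigma> \<tau> v = \<rho> v"
    using \<tau> core_sites_subset[of R'] unfolding Omega_bc_rect_iff splice_inner_def by auto
  ultimately show ?thesis unfolding Omega_bc_rect_iff by blast
qed

lemma occupied_split: "finite A \<Longrightarrow> occupied \<eta> A = occupied \<eta> (A \<inter> C) + occupied \<eta> (A - C)"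
  unfolding occupied_def by (subst card_Un_disjoint[symmetric]) (auto intro: arg_cong[where f = card])

lemma occupied_cong: "(\<And>v. v \<in> A \<Longrightarrow> \<eta> v = \<eta>' v) \<Longrightarrow> occupied \<eta> A = occupied \<eta>' A"
  unfolding occupied_def by (metis (no_types, lifting) Collect_cong)

lemma occupied_le_card: "finite B \<Longrightarrow> A \<subseteq> B \<Longrightarrow> occupied \<eta> A \<le> card B"
  unfolding occupied_def by (rule card_mono) auto

lemma occupied_le_agree:
  assumes "finite A" "finite Z" "\<And>v. v \<in> A \<Longrightarrow> v \<notin> Z \<Longrightarrow> \<eta> v = \<eta>' v"
  shows "occupied \<eta> A \<le> occupied \<eta>' A + card Z"
proof -
  have "{v \<in> A. \<eta> v} \<subseteq> {v \<in> A. \<eta>' v} \<union> Z" using assms(3) by auto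
  then have "occupied \<eta> A \<le> card ({v \<in> A. \<eta>' v} \<union> Z)"
    unfolding occupied_def by (rule card_mono[rotated]) (use assms(1,2) in auto)
  also have "\<dots> \<le> occupied \<eta>' A + card Z" unfolding occupied_def by (rule card_Un_le)
  finally show ?thesis .
qed

text \<open>The splices reshuffle the tiles of the pair, except for those in the collar.\<close>
lemma inner_tiles_splice:
  fixes \<sigma> \<tau> :: config
  assumes m: "has_margin R R'"
  defines "n \<equiv> inner_tiles R \<sigma> + inner_tiles R' \<tau>"
    and "n' \<equiv> inner_tiles R (splice_outer R' \<sigma> \<tau>) + inner_tiles R' (splice_inner R' \<sigma> \<tau>)"
  shows "n \<le> n' + 2 * card (collar R')" and "n' \<le> n + 2 * card (collar R')"
proof -
  let ?C = "core_sites R'" and ?s1 = "splice_outer R' \<sigma> \<tau>" and ?s2 = "splice_inner R' \<sigma> \<tau>"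
  have CR: "inner_sites R \<inter> ?C = ?C"
    using core_sites_subset[of R'] enlarged_sites_subset_inner[OF m] inner_sites_subset[of R']
      rect_sites_subset_enlarged[of R'] by blast
  have CR': "inner_sites R' \<inter> ?C = ?C" using core_sites_subset[of R'] by blast
  have t1: "inner_tiles R \<eta> = occupied \<eta> ?C + occupied \<eta> (inner_sites R - ?C)" for \<eta>
    using occupied_split[OF finite_inner_sites, of \<eta> R ?C] CR by simp
  have t2: "inner_tiles R' \<eta> = occupied \<eta> ?C + occupied \<eta> (inner_sites R' - ?C)" for \<eta>
    using occupied_split[OF finite_inner_sites, of \<eta> R' ?C] CR' by simp
  have e1: "occupied ?s1 ?C = occupied \<tau> ?C"
    using core_sites_subset[of R'] inner_sites_subset[of R'] by (intro occupied_cong) (auto simp: splice_outer_def)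
  have e2: "occupied ?s2 ?C = occupied \<sigma> ?C" by (rule occupied_cong) (auto simp: splice_inner_def)
  have e3: "occupied ?s2 (inner_sites R' - ?C) = 0" unfolding occupied_def by (auto simp: splice_inner_def)
  have agree: "?s1 v = \<sigma> v" if "v \<notin> collar R'" "v \<in> inner_sites R - ?C" for v
    using that splice_outer_outside unfolding collar_def by blast
  have a1: "occupied \<sigma> (inner_sites R - ?C) \<le> occupied ?s1 (inner_sites R - ?C) + card (collar R')"
    using agree by (intro occupied_le_agree[OF _ finite_collar]) (auto simp: finite_inner_sites)
  have a2: "occupied ?s1 (inner_sites R - ?C) \<le> occupied \<sigma> (inner_sites R - ?C) + card (collar R')"
    using agree by (intro occupied_le_agree[OF _ finite_collar]) (auto simp: finite_inner_sites)
  have "inner_sites R' - ?C \<subseteq> collar R'"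
    unfolding collar_def using inner_sites_subset[of R'] rect_sites_subset_enlarged[of R'] by blast
  then have b: "occupied \<tau> (inner_sites R' - ?C) \<le> card (collar R')"
    by (rule occupied_le_card[OF finite_collar])
  show "n \<le> n' + 2 * card (collar R')" and "n' \<le> n + 2 * card (collar R')"
    unfolding n_def n'_def t1 t2 e1 e2 e3 using a1 a2 b by linarith+
qed

text \<open>A pair is recovered from its splices and the restriction of \<open>\<sigma>\<close> to the collar.\<close>
lemma card_splice_fibre:
  shows "card {p \<in> Omega_bc (rect_set R) \<rho>1 \<times> Omega_bc (rect_set R') \<rho>2.
            (splice_outer R' (fst p) (snd p), splice_inner R' (fst p) (snd p)) = q} \<le> 2 ^ card (collar R')"
proof -
  let ?F = "{p \<in> Omega_bc (rect_set R) \<rho>1 \<times> Omega_bc (rect_set R') \<rho>2.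
            (splice_outer R' (fst p) (snd p), splice_inner R' (fst p) (snd p)) = q}"
  let ?trace = "\<lambda>p. {u \<in> collar R'. fst p u}"
  have "inj_on ?trace ?F"
  proof (rule inj_onI)
    fix p p' assume p: "p \<in> ?F" and p': "p' \<in> ?F" and tr: "?trace p = ?trace p'"
    obtain \<sigma> \<tau> \<sigma>' \<tau>' where pp: "p = (\<sigma>, \<tau>)" "p' = (\<sigma>', \<tau>')" by (cases p, cases p')
    have s1: "splice_outer R' \<sigma> \<tau> = splice_outer R' \<sigma>' \<tau>'" and s2: "splice_inner R' \<sigma> \<tau> = splice_inner R' \<sigma>' \<tau>'"
      using p p' unfolding pp by auto
    have "\<tau> \<in> Omega_bc (rect_set R') \<rho>2" "\<tau>' \<in> Omega_bc (rect_set R') \<rho>2" using p p' pp by auto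
    then have bc: "\<tau> v = \<tau>' v" if "v \<notin> inner_sites R'" for v
      using that by (metis Omega_bc_rect_iff)
    have "\<tau> = \<tau>'"
    proof
      fix v show "\<tau> v = \<tau>' v"
        using fun_cong[OF s1, of v] bc[of v] inner_sites_subset[of R']
        by (cases "v \<in> rect_sites R'") (auto simp: splice_outer_def)
    qed
    moreover have "\<sigma> u = \<sigma>' u" for u
    proof -
      consider "u \<in> core_sites R'" | "u \<in> collar R'" | "u \<notin> enlarged_sites R'"
        unfolding collar_def by blast
      then show ?thesis
      proof cases
        case 1 then show ?thesis using fun_cong[OF s2, of u] by (simp add: splice_inner_def)
      next
        case 2 then show ?thesis using tr unfolding pp by auto
      next
        case 3 then show ?thesis using fun_cong[OF s1, of u] by (simp add: splice_outer_outside)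
      qed
    qed
    ultimately show "p = p'" unfolding pp by auto
  qed
  then have "card ?F = card (?trace ` ?F)" by (rule card_image[symmetric])
  also have "\<dots> \<le> card (Pow (collar R'))" by (rule card_mono) (use finite_collar in auto)
  also have "\<dots> = 2 ^ card (collar R')" using finite_collar by (simp add: card_Pow)
  finally show ?thesis .
qed

lemma sum_le_by_fibres:
  fixes g h :: "'a \<Rightarrow> real"
  assumes "finite A" "\<Phi> ` A \<subseteq> A" "\<And>b. b \<in> A \<Longrightarrow> card {a \<in> A. \<Phi> a = b} \<le> N"
    and "\<And>b. b \<in> A \<Longrightarrow> h b \<ge> 0" "\<And>a. a \<in> A \<Longrightarrow> g a \<le> h (\<Phi> a)"
  shows "(\<Sum>a\<in>A. g a) \<le> real N * (\<Sum>b\<in>A. h b)"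
proof -
  have "(\<Sum>a\<in>A. g a) \<le> (\<Sum>a\<in>A. h (\<Phi> a))" by (rule sum_mono) (rule assms(5))
  also have "\<dots> = (\<Sum>b\<in>\<Phi> ` A. real (card {a \<in> A. \<Phi> a = b}) * h b)"
    by (subst sum.image_gen[OF assms(1)]) (auto intro!: sum.cong)
  also have "\<dots> \<le> (\<Sum>b\<in>\<Phi> ` A. real N * h b)"
    using assms(2-4) by (intro sum_mono mult_right_mono) auto
  also have "\<dots> \<le> (\<Sum>b\<in>A. real N * h b)"
    using assms by (intro sum_mono2) auto
  finally show ?thesis by (simp add: sum_distrib_left)
qed

lemma power_le_power_shift:
  fixes lam :: real
  assumes "lam > 0" "a \<le> b + d" "b \<le> a + d"
  shows "(min lam (1/lam)) ^ d * lam ^ a \<le> lam ^ b"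
proof (cases "lam \<ge> 1")
  case True
  then have "1/lam \<le> lam" using order_trans[of "1/lam" 1 lam] by simp
  then have "min lam (1/lam) = 1/lam" by simp
  moreover have "lam ^ a \<le> lam ^ b * lam ^ d" using assms True by (simp add: power_increasing flip: power_add)
  ultimately show ?thesis using assms(1) by (simp add: power_one_over divide_le_eq mult.commute)
next
  case False
  then have "lam \<le> 1/lam" using assms(1) by (simp add: le_divide_eq power2_eq_square[symmetric] power_le_one)
  then have "min lam (1/lam) = lam" by simp
  moreover have "lam ^ (a + d) \<le> lam ^ b" using assms False by (intro power_decreasing) auto
  ultimately show ?thesis by (simp add: power_add mult.commute)
qed

text \<open>Summed over pairs of configurations, the splice map trades \<open>f\<close> of the second component for \<open>f\<close> of
  the first one, at the cost of the collar in the weights and in the multiplicity of the map.\<close>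
lemma splice_pair_sum_le:
  fixes lam :: real and \<rho>1 \<rho>2 :: config
  assumes lam: "lam > 0" and m: "has_margin R R'"
    and loc: "is_local (rect_set R') f" and f_nonneg: "\<forall>\<sigma>\<in>Omega. f \<sigma> \<ge> 0"
  defines "w p \<equiv> lam ^ inner_tiles R (fst p) * lam ^ inner_tiles R' (snd p)"
    and "P \<equiv> Omega_bc (rect_set R) \<rho>1 \<times> Omega_bc (rect_set R') \<rho>2"
  shows "(min lam (1/lam)) ^ (2 * card (collar R')) * (\<Sum>p\<in>P. w p * f (snd p))
    \<le> 2 ^ card (collar R') * (\<Sum>p\<in>P. w p * f (fst p))"
proof -
  define \<Phi> where "\<Phi> p = (splice_outer R' (fst p) (snd p), splice_inner R' (fst p) (snd p))" for p
  have in_Omega: "fst p \<in> Omega" "snd p \<in> Omega" if "p \<in> P" for p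
    using that Omega_bc_subset[of "rect_set R" \<rho>1] Omega_bc_subset[of "rect_set R'" \<rho>2]
    unfolding P_def by auto
  have \<Phi>_into: "\<Phi> ` P \<subseteq> P"
  proof (rule image_subsetI)
    fix p assume "p \<in> P"
    then obtain \<sigma> \<tau> where p: "p = (\<sigma>, \<tau>)"
      and \<sigma>: "\<sigma> \<in> Omega_bc (rect_set R) \<rho>1" and \<tau>: "\<tau> \<in> Omega_bc (rect_set R') \<rho>2"
      unfolding P_def by blast
    have "splice_outer R' \<sigma> \<tau> \<in> Omega_bc (rect_set R) \<rho>1"
      by (rule splice_outer_in_Omega_bc[OF m \<sigma>]) (use \<tau> Omega_bc_subset in blast)
    moreover have "splice_inner R' \<sigma> \<tau> \<in> Omega_bc (rect_set R') \<rho>2"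
      by (rule splice_inner_in_Omega_bc[OF _ \<tau>]) (use \<sigma> Omega_bc_subset in blast)
    ultimately show "\<Phi> p \<in> P" unfolding P_def \<Phi>_def p by simp
  qed
  have f_splice: "f (fst (\<Phi> p)) = f (snd p)" if p: "p \<in> P" for p
  proof (rule is_local_rectD[OF loc])
    show "fst (\<Phi> p) \<in> Omega" using in_Omega[OF subsetD[OF \<Phi>_into imageI[OF p]]] by simp
    show "snd p \<in> Omega" using in_Omega[OF p] by simp
  qed (simp add: \<Phi>_def splice_outer_def)
  have "(min lam (1/lam)) ^ (2 * card (collar R')) * (w p * f (snd p)) \<le> w (\<Phi> p) * f (fst (\<Phi> p))"
    if p: "p \<in> P" for p
  proof -
    have "(min lam (1/lam)) ^ (2 * card (collar R')) * w p \<le> w (\<Phi> p)"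
      using power_le_power_shift[OF lam inner_tiles_splice[OF m]]
      unfolding w_def \<Phi>_def by (simp add: power_add)
    then show ?thesis using f_splice[OF p] f_nonneg in_Omega[OF p]
      by (simp add: mult_right_mono flip: mult.assoc)
  qed
  then have "(\<Sum>p\<in>P. (min lam (1/lam)) ^ (2 * card (collar R')) * (w p * f (snd p)))
      \<le> real (2 ^ card (collar R')) * (\<Sum>p\<in>P. w p * f (fst p))"
    using f_nonneg in_Omega lam card_splice_fibre[of R \<rho>1 R' \<rho>2] finite_Omega_bc
    unfolding w_def P_def \<Phi>_def by (intro sum_le_by_fibres[OF _ \<Phi>_into[unfolded P_def \<Phi>_def]]) auto
  then show ?thesis by (simp add: sum_distrib_left)
qed

lemma tile_mean_comparison:
  fixes lam :: real
  assumes lam: "lam > 0" and m: "has_margin R R'" and \<rho>1: "\<rho>1 \<in> Omega" and \<rho>2: "\<rho>2 \<in> Omega"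
    and loc: "is_local (rect_set R') f" and f_nonneg: "\<forall>\<sigma>\<in>Omega. f \<sigma> \<ge> 0"
  shows "((min lam (1/lam))^2 / 2) ^ card (collar R') * tile_mean lam R' \<rho>2 f \<le> tile_mean lam R \<rho>1 f"
proof -
  define S1 S2 where "S1 = Omega_bc (rect_set R) \<rho>1" and "S2 = Omega_bc (rect_set R') \<rho>2"
  define q r where "q = min lam (1/lam)" and "r = card (collar R')"
  define W1 W2 N1 N2 where "W1 = (\<Sum>\<sigma>\<in>S1. lam ^ inner_tiles R \<sigma>)" and "W2 = (\<Sum>\<tau>\<in>S2. lam ^ inner_tiles R' \<tau>)"
    and "N1 = (\<Sum>\<sigma>\<in>S1. lam ^ inner_tiles R \<sigma> * f \<sigma>)" and "N2 = (\<Sum>\<tau>\<in>S2. lam ^ inner_tiles R' \<tau> * f \<tau>)"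
  have W_pos: "W1 > 0" "W2 > 0" unfolding W1_def W2_def S1_def S2_def
    using lam \<rho>1 \<rho>2 finite_Omega_bc[of R \<rho>1] finite_Omega_bc[of R' \<rho>2] self_in_Omega_bc
    by (auto intro!: sum_pos2)
  have "q^(2*r) * (W1 * N2) \<le> 2^r * (N1 * W2)"
    using splice_pair_sum_le[OF lam m loc f_nonneg, of \<rho>1 \<rho>2]
    unfolding W1_def W2_def N1_def N2_def sum_product sum.cartesian_product S1_def S2_def q_def r_def
    by (simp add: case_prod_beta mult_ac)
  moreover have "(q^2/2)^r = q^(2*r) / 2^r" by (simp add: power_divide power_mult)
  ultimately have "(q^2/2)^r * (N2 / W2) \<le> N1 / W1"
    using W_pos by (simp add: field_simps)
  then show ?thesis
    unfolding tile_mean_def wmean_def N1_def N2_def W1_def W2_def S1_def S2_def q_def r_def .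
qed

section \<open>The periodic measure as a mixture of boundary-condition measures\<close>

definition fold_site :: "rect \<Rightarrow> site \<Rightarrow> site" where
  "fold_site R u = (case R of (x, y, K, L) \<Rightarrow> (x + (fst u - x) mod K, y + (snd u - y) mod L))"

lemma fold_site_in_rect_sites: "is_rect R \<Longrightarrow> fold_site R u \<in> rect_sites R"
  by (cases R) (auto simp: fold_site_def rect_sites_def is_rect_def intro: order.strict_implies_order)

lemma fold_site_inner: "u \<in> inner_sites R \<Longrightarrow> fold_site R u = u"
  by (cases R; cases u) (auto simp: fold_site_def inner_sites_def mod_pos_pos_trivial)

lemma fold_site_shift: "fold_site R (a + k * width R, b + l * height R) = fold_site R (a, b)"
proof (cases R)
  case (fields x y K L)
  have "(a + k * K - x) mod K = (a - x) mod K" "(b + l * L - y) mod L = (b - y) mod L"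
    by (metis add.commute add_diff_eq mod_mult_self1)+
  then show ?thesis using fields by (simp add: fold_site_def width_def height_def)
qed

lemma fold_site_decomp: "\<exists>k l. u = (fst (fold_site R u) + k * width R, snd (fold_site R u) + l * height R)"
proof (cases R)
  case (fields x y K L)
  have "fst u = x + (fst u - x) mod K + ((fst u - x) div K) * K"
    "snd u = y + (snd u - y) mod L + ((snd u - y) div L) * L"
    using div_mult_mod_eq[of "fst u - x" K] div_mult_mod_eq[of "snd u - y" L] by linarith+
  then have "u = (fst (fold_site R u) + ((fst u - x) div K) * width R,
      snd (fold_site R u) + ((snd u - y) div L) * height R)"
    unfolding fields fold_site_def width_def height_def by (simp add: prod_eq_iff)
  then show ?thesis by blast
qed

lemma fold_site_fixed:
  assumes "is_rect R" "z \<in> rect_sites R" "fold_site R z \<in> inner_sites R"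
  shows "fold_site R z = z"
proof (cases R)
  case (fields x y K L)
  obtain a b where z: "z = (a, b)" by (cases z)
  have "K > 0" "L > 0" using assms(1) fields by (auto simp: is_rect_def)
  moreover have "x \<le> a" "a \<le> x + K" "y \<le> b" "b \<le> y + L"
    using assms(2) fields z by (auto simp: rect_sites_def)
  moreover have "0 < (a - x) mod K" "0 < (b - y) mod L"
    using assms(3) fields z by (auto simp: fold_site_def inner_sites_def)
  ultimately have "a - x < K" "b - y < L" by (auto simp: order.order_iff_strict)
  with \<open>x \<le> a\<close> \<open>y \<le> b\<close> show ?thesis using fields z by (simp add: fold_site_def mod_pos_pos_trivial)
qed

definition periodic :: "rect \<Rightarrow> config \<Rightarrow> bool" where
  "periodic R \<tau> = (\<forall>v. \<tau> v = \<tau> (fst v + width R, snd v) \<and> \<tau> v = \<tau> (fst v, snd v + height R))"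

lemma Omega_per_iff: "\<tau> \<in> Omega_per R \<longleftrightarrow> \<tau> \<in> Omega \<and> periodic R \<tau>"
  unfolding Omega_per_def periodic_def by auto

lemma periodic_shift:
  assumes "periodic R \<tau>"
  shows "\<tau> (a + k * width R, b + l * height R) = \<tau> (a, b)"
proof -
  have step: "\<tau> (a + width R, b) = \<tau> (a, b)" "\<tau> (a, b + height R) = \<tau> (a, b)" for a b
    using assms[unfolded periodic_def, rule_format, of "(a, b)"] by (metis fst_conv snd_conv)+
  have horiz: "\<tau> (a + k * width R, b) = \<tau> (a, b)" for a b k
  proof (induction k rule: int_induct[where k = 0])
    case (step1 i)
    then show ?case using step(1)[of "a + i * width R" b] by (simp add: algebra_simps)
  next
    case (step2 i)
    then show ?case using step(1)[of "a + (i - 1) * width R" b] by (simp add: algebra_simps)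
  qed simp
  have vert: "\<tau> (a, b + l * height R) = \<tau> (a, b)" for a b l
  proof (induction l rule: int_induct[where k = 0])
    case (step1 i)
    then show ?case using step(2)[of a "b + i * height R"] by (simp add: algebra_simps)
  next
    case (step2 i)
    then show ?case using step(2)[of a "b + (i - 1) * height R"] by (simp add: algebra_simps)
  qed simp
  show ?thesis using horiz vert by simp
qed

lemma periodic_fold_site: "periodic R \<tau> \<Longrightarrow> \<tau> (fold_site R u) = \<tau> u"
  using fold_site_decomp[of u R] periodic_shift by (metis prod.collapse)

definition periodize :: "rect \<Rightarrow> config \<Rightarrow> config" where
  "periodize R \<eta> = \<eta> \<circ> fold_site R"

lemma periodize_agrees:
  assumes R: "is_rect R" and \<tau>: "periodic R \<tau>" and \<eta>: "\<eta> \<in> Omega_bc (rect_set R) \<tau>"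
    and z: "z \<in> rect_sites R"
  shows "periodize R \<eta> z = \<eta> z"
proof (cases "fold_site R z \<in> inner_sites R")
  case True
  then show ?thesis using fold_site_fixed[OF R z] by (simp add: periodize_def)
next
  case False
  then have "z \<notin> inner_sites R" using fold_site_inner by metis
  then have "\<eta> z = \<tau> z" "\<eta> (fold_site R z) = \<tau> (fold_site R z)"
    using False \<eta> unfolding Omega_bc_rect_iff by blast+
  then show ?thesis using periodic_fold_site[OF \<tau>] by (simp add: periodize_def)
qed

text \<open>If the fold of \<open>u\<close> is inner, translating \<open>w\<close> along with \<open>u\<close> produces a conflict inside \<open>\<eta>\<close>.\<close>
lemma periodize_conflict_inner:
  assumes R: "is_rect R" and \<tau>: "periodic R \<tau>" and \<eta>: "\<eta> \<in> Omega_bc (rect_set R) \<tau>"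
    and occ: "periodize R \<eta> u" "periodize R \<eta> w" and "u \<noteq> w" "near u w"
    and inner: "fold_site R u \<in> inner_sites R"
  shows False
proof -
  obtain k l where u: "u = (fst (fold_site R u) + k * width R, snd (fold_site R u) + l * height R)"
    using fold_site_decomp by blast
  define z where "z = (fst w - k * width R, snd w - l * height R)"
  have nz: "near (fold_site R u) z" using \<open>near u w\<close> u unfolding near_def z_def
    by (metis (no_types, lifting) add_diff_cancel_right' diff_diff_eq2 fst_conv snd_conv)
  have "z \<noteq> fold_site R u" using \<open>u \<noteq> w\<close> u unfolding z_def by (auto simp: prod_eq_iff)
  moreover have "z \<in> rect_sites R" by (rule near_inner_sites[OF nz inner])
  then have "\<eta> z" using occ(2) fold_site_shift[of R "fst z" k "snd z" l] periodize_agrees[OF R \<tau> \<eta>]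
    by (simp add: z_def periodize_def)
  moreover have "\<eta> (fold_site R u)" using occ(1) by (simp add: periodize_def)
  moreover have "\<eta> \<in> Omega" using \<eta> Omega_bc_subset by blast
  ultimately show False using nz Omega_iff by metis
qed

lemma periodize_in_Omega_per:
  assumes R: "is_rect R" and \<tau>: "\<tau> \<in> Omega_per R" and \<eta>: "\<eta> \<in> Omega_bc (rect_set R) \<tau>"
  shows "periodize R \<eta> \<in> Omega_per R"
proof -
  have p: "periodic R \<tau>" and "\<tau> \<in> Omega" using \<tau> by (simp_all add: Omega_per_iff)
  have "periodize R \<eta> \<in> Omega"
    unfolding Omega_iff
  proof (intro allI impI notI)
    fix u w assume occ: "periodize R \<eta> u \<and> periodize R \<eta> w \<and> u \<noteq> w" and n: "near u w"
    show False
    proof (cases "fold_site R u \<in> inner_sites R \<or> fold_site R w \<in> inner_sites R")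
      case True
      then show False using periodize_conflict_inner[OF R p \<eta>] occ n near_sym by metis
    next
      case False
      then have "\<tau> u" "\<tau> w" using occ \<eta> periodic_fold_site[OF p]
        unfolding periodize_def Omega_bc_rect_iff by auto
      then show False using \<open>\<tau> \<in> Omega\<close> occ n Omega_iff by metis
    qed
  qed
  moreover have "periodic R (periodize R \<eta>)"
    using fold_site_shift[of R _ 1 _ 0] fold_site_shift[of R _ 0 _ 1]
    unfolding periodic_def periodize_def by simp
  ultimately show ?thesis by (simp add: Omega_per_iff)
qed

definition boundary_trace :: "rect \<Rightarrow> config \<Rightarrow> config" where
  "boundary_trace R \<tau> = (\<lambda>u. u \<in> rect_sites R - inner_sites R \<and> \<tau> u)"

definition per_class :: "rect \<Rightarrow> config \<Rightarrow> config set" where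
  "per_class R \<tau> = {\<tau>' \<in> Omega_per R. boundary_trace R \<tau>' = boundary_trace R \<tau>}"

lemma per_class_iff:
  "\<tau>' \<in> per_class R \<tau> \<longleftrightarrow> \<tau>' \<in> Omega_per R \<and> (\<forall>u \<in> rect_sites R - inner_sites R. \<tau>' u = \<tau> u)"
  unfolding per_class_def boundary_trace_def by (auto simp: fun_eq_iff)

lemma bij_periodize:
  assumes R: "is_rect R" and \<tau>: "\<tau> \<in> Omega_per R"
  shows "bij_betw (periodize R) (Omega_bc (rect_set R) \<tau>) (per_class R \<tau>)"
proof (rule bij_betw_byWitness[where f' = "\<lambda>\<tau>' u. if u \<in> rect_sites R then \<tau>' u else \<tau> u"])
  have p: "periodic R \<tau>" and "\<tau> \<in> Omega" using \<tau> by (simp_all add: Omega_per_iff)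
  have bc: "\<eta> v = \<tau> v" if "\<eta> \<in> Omega_bc (rect_set R) \<tau>" "v \<notin> inner_sites R" for \<eta> v
    using that unfolding Omega_bc_rect_iff by blast
  show "\<forall>\<eta>\<in>Omega_bc (rect_set R) \<tau>. (\<lambda>u. if u \<in> rect_sites R then periodize R \<eta> u else \<tau> u) = \<eta>"
  proof (intro ballI ext)
    fix \<eta> u assume \<eta>: "\<eta> \<in> Omega_bc (rect_set R) \<tau>"
    show "(if u \<in> rect_sites R then periodize R \<eta> u else \<tau> u) = \<eta> u"
      using periodize_agrees[OF R p \<eta>, of u] bc[OF \<eta>, of u] inner_sites_subset[of R] by auto
  qed
  show "\<forall>\<tau>'\<in>per_class R \<tau>. periodize R (\<lambda>u. if u \<in> rect_sites R then \<tau>' u else \<tau> u) = \<tau>'"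
    using fold_site_in_rect_sites[OF R] periodic_fold_site
    by (auto simp: per_class_iff Omega_per_iff periodize_def fun_eq_iff)
  show "periodize R ` Omega_bc (rect_set R) \<tau> \<subseteq> per_class R \<tau>"
    using periodize_in_Omega_per[OF R \<tau>] periodize_agrees[OF R p] bc by (auto simp: per_class_iff)
  show "(\<lambda>\<tau>' u. if u \<in> rect_sites R then \<tau>' u else \<tau> u) ` per_class R \<tau> \<subseteq> Omega_bc (rect_set R) \<tau>"
  proof (rule image_subsetI)
    fix \<tau>' assume "\<tau>' \<in> per_class R \<tau>"
    then have \<tau>': "\<tau>' \<in> Omega" "\<forall>u \<in> rect_sites R - inner_sites R. \<tau>' u = \<tau> u"
      by (simp_all add: per_class_iff Omega_per_iff)
    have "(\<lambda>u. if u \<in> inner_sites R then \<tau>' u else \<tau> u) \<in> Omega_bc (rect_set R) \<tau>"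
      using replace_inside_in_Omega_bc[OF _ self_in_Omega_bc[OF \<tau>'(1)] \<tau>'(2)]
        Omega_subset_outer_hard_core \<open>\<tau> \<in> Omega\<close> by blast
    moreover have "(\<lambda>u. if u \<in> rect_sites R then \<tau>' u else \<tau> u) = (\<lambda>u. if u \<in> inner_sites R then \<tau>' u else \<tau> u)"
      using \<tau>'(2) inner_sites_subset[of R] by (force simp: fun_eq_iff)
    ultimately show "(\<lambda>u. if u \<in> rect_sites R then \<tau>' u else \<tau> u) \<in> Omega_bc (rect_set R) \<tau>" by simp
  qed
qed

lemma weight_local:
  assumes "\<forall>u\<in>rect_sites R. \<sigma> u = \<sigma>' u"
  shows "weight lam R \<sigma> = weight lam R \<sigma>'"
proof -
  have "vacant \<sigma> F = vacant \<sigma>' F" if "face F \<subseteq> rect_set R" for F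
    using that assms face_corners_subset_rect_sites[of F R] unfolding vacant_iff rect_faces_def by auto
  then have "{F. face F \<subseteq> rect_set R \<and> vacant \<sigma> F} = {F. face F \<subseteq> rect_set R \<and> vacant \<sigma>' F}" by blast
  then show ?thesis unfolding weight_def by simp
qed

lemma wmean_per_class:
  assumes R: "is_rect R" and \<tau>: "\<tau> \<in> Omega_per R" and loc: "is_local (rect_set R) f"
  shows "wmean (weight lam R) (per_class R \<tau>) f = bc_mean lam R \<tau> f"
proof -
  have bij: "bij_betw (periodize R) (Omega_bc (rect_set R) \<tau>) (per_class R \<tau>)" by (rule bij_periodize[OF R \<tau>])
  have "weight lam R (periodize R \<eta>) = weight lam R \<eta>" "f (periodize R \<eta>) = f \<eta>"
    if \<eta>: "\<eta> \<in> Omega_bc (rect_set R) \<tau>" for \<eta>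
  proof -
    have agree: "\<forall>u\<in>rect_sites R. periodize R \<eta> u = \<eta> u"
      using periodize_agrees[OF R _ \<eta>] \<tau> by (simp add: Omega_per_iff)
    then show "weight lam R (periodize R \<eta>) = weight lam R \<eta>" by (rule weight_local)
    show "f (periodize R \<eta>) = f \<eta>"
      using loc agree periodize_in_Omega_per[OF R \<tau> \<eta>] \<eta> Omega_bc_subset
      unfolding is_local_rect_iff Omega_per_iff by blast
  qed
  then show ?thesis
    unfolding bc_mean_def wmean_def
    by (simp add: sum.reindex_bij_betw[OF bij, symmetric] cong: sum.cong)
qed

lemma finite_Omega_per:
  assumes R: "is_rect R" shows "finite (Omega_per R)"
proof -
  have "inj_on (\<lambda>\<sigma>. {u \<in> rect_sites R. \<sigma> u}) (Omega_per R)"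
  proof (rule inj_onI)
    fix \<sigma> \<sigma>' assume "\<sigma> \<in> Omega_per R" "\<sigma>' \<in> Omega_per R" and e: "{u \<in> rect_sites R. \<sigma> u} = {u \<in> rect_sites R. \<sigma>' u}"
    then have "periodic R \<sigma>" "periodic R \<sigma>'" by (simp_all add: Omega_per_iff)
    moreover have "\<sigma> (fold_site R u) = \<sigma>' (fold_site R u)" for u
      using e fold_site_in_rect_sites[OF R, of u] by blast
    ultimately show "\<sigma> = \<sigma>'" using periodic_fold_site by fastforce
  qed
  moreover have "(\<lambda>\<sigma>. {u \<in> rect_sites R. \<sigma> u}) ` Omega_per R \<subseteq> Pow (rect_sites R)" by auto
  ultimately show ?thesis
    using finite_rect_sites by (metis finite_Pow_iff finite_imageD finite_subset)
qed

lemma per_mean_in_convex_hull: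
  assumes R: "is_rect R" and lam: "lam > 0" and loc: "is_local (rect_set R) f"
  shows "per_mean lam R f \<in> convex hull ((\<lambda>\<rho>. tile_mean lam R \<rho> f) ` Omega)"
proof -
  have "(\<lambda>_. False) \<in> Omega_per R" by (simp add: Omega_per_iff Omega_iff periodic_def)
  then have ne: "Omega_per R \<noteq> {}" by blast
  have "per_mean lam R f \<in> convex hull ((\<lambda>\<tau>. wmean (weight lam R) (per_class R \<tau>) f) ` Omega_per R)"
    unfolding per_mean_def per_class_def using finite_Omega_per[OF R] ne lam
    by (intro wmean_in_convex_hull_fibres) (auto simp: weight_def)
  moreover have "(\<lambda>\<tau>. wmean (weight lam R) (per_class R \<tau>) f) ` Omega_per R \<subseteq> (\<lambda>\<rho>. tile_mean lam R \<rho> f) ` Omega"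
  proof (rule image_subsetI)
    fix \<tau> assume \<tau>: "\<tau> \<in> Omega_per R"
    then have "wmean (weight lam R) (per_class R \<tau>) f = tile_mean lam R \<tau> f"
      using wmean_per_class[OF R \<tau> loc] bc_mean_eq_tile_mean[OF lam] by simp
    then show "wmean (weight lam R) (per_class R \<tau>) f \<in> (\<lambda>\<rho>. tile_mean lam R \<rho> f) ` Omega"
      using \<tau> by (auto simp: Omega_per_iff)
  qed
  ultimately show ?thesis using hull_mono by blast
qed

section \<open>Gibbs measures as mixtures of boundary-condition measures\<close>

lemma space_cfg_space: "space cfg_space = UNIV"
  unfolding cfg_space_def space_PiM by simp

lemma sets_site_eq: "{\<sigma>. \<sigma> u = c} \<in> sets cfg_space"
proof -
  have "(\<lambda>\<sigma>::config. \<sigma> u) \<in> measurable cfg_space (count_space UNIV)"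
    unfolding cfg_space_def by (rule measurable_component_singleton) simp
  from measurable_sets[OF this, of "{c}"] show ?thesis by (simp add: space_cfg_space vimage_def)
qed

lemma sets_INT_cfg_space:
  fixes F :: "'i::countable \<Rightarrow> config set"
  assumes "\<And>i. i \<in> I \<Longrightarrow> F i \<in> sets cfg_space"
  shows "(\<Inter>i\<in>I. F i) \<in> sets cfg_space"
proof (rule sets.countable_INT'')
  show "UNIV \<in> sets cfg_space" using sets.top[of cfg_space] by (simp add: space_cfg_space)
qed (use assms in auto)

lemma sets_no_conflict: "{\<sigma>::config. \<forall>u v. P u v \<longrightarrow> \<not> (\<sigma> u \<and> \<sigma> v)} \<in> sets cfg_space"
proof -
  have "{\<sigma>::config. \<forall>u v. P u v \<longrightarrow> \<not> (\<sigma> u \<and> \<sigma> v)} =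
        (\<Inter>p\<in>{p. P (fst p) (snd p)}. {\<sigma>. \<sigma> (fst p) = False} \<union> {\<sigma>. \<sigma> (snd p) = False})"
    by auto
  also have "\<dots> \<in> sets cfg_space"
    by (intro sets_INT_cfg_space sets.Un sets_site_eq)
  finally show ?thesis .
qed

lemma sets_Omega: "Omega \<in> sets cfg_space"
proof -
  have eq: "Omega = {\<sigma>. \<forall>u v. u \<noteq> v \<and> near u v \<longrightarrow> \<not> (\<sigma> u \<and> \<sigma> v)}"
    using Omega_iff by blast
  show ?thesis unfolding eq by (rule sets_no_conflict)
qed

text \<open>The outside events on which the specification is constant.\<close>
definition boundary_event :: "rect \<Rightarrow> site set \<Rightarrow> config set" where
  "boundary_event Q b = outer_hard_core Q \<inter> (\<Inter>u \<in> rect_sites Q - inner_sites Q. {\<sigma>. \<sigma> u = (u \<in> b)})"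

lemma sets_boundary_event: "boundary_event Q b \<in> sets cfg_space"
  unfolding boundary_event_def outer_hard_core_def
  by (intro sets.Int sets_no_conflict sets_INT_cfg_space sets_site_eq)

lemma outside_event_boundary_event: "outside_event (rect_set Q) (boundary_event Q b)"
  unfolding outside_event_def pt_in_interior_rect_set_iff
proof (intro conjI sets_boundary_event allI impI)
  fix \<sigma> \<tau> :: config assume "\<forall>v. v \<notin> inner_sites Q \<longrightarrow> \<sigma> v = \<tau> v"
  then have agree: "v \<notin> inner_sites Q \<Longrightarrow> \<sigma> v = \<tau> v" for v by blast
  show "\<sigma> \<in> boundary_event Q b \<longleftrightarrow> \<tau> \<in> boundary_event Q b"
    unfolding boundary_event_def outer_hard_core_def by (simp add: agree cong: conj_cong)
qed

lemma outer_hard_core_eq_boundary_events: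
  "outer_hard_core Q = (\<Union>b \<in> Pow (rect_sites Q - inner_sites Q). boundary_event Q b)"
proof
  show "outer_hard_core Q \<subseteq> (\<Union>b \<in> Pow (rect_sites Q - inner_sites Q). boundary_event Q b)"
  proof
    fix \<sigma> assume "\<sigma> \<in> outer_hard_core Q"
    then have "\<sigma> \<in> boundary_event Q {u \<in> rect_sites Q - inner_sites Q. \<sigma> u}"
      unfolding boundary_event_def by blast
    then show "\<sigma> \<in> (\<Union>b \<in> Pow (rect_sites Q - inner_sites Q). boundary_event Q b)"
      by (rule UN_I[rotated]) auto
  qed
  show "(\<Union>b \<in> Pow (rect_sites Q - inner_sites Q). boundary_event Q b) \<subseteq> outer_hard_core Q"
    unfolding boundary_event_def by blast
qed

lemma disjoint_boundary_events: "disjoint_family_on (boundary_event Q) (Pow (rect_sites Q - inner_sites Q))"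
  unfolding disjoint_family_on_def boundary_event_def by auto

lemma tile_mean_boundary_invariant:
  assumes \<sigma>: "\<sigma> \<in> outer_hard_core Q" "\<sigma>' \<in> outer_hard_core Q"
    and bd: "\<forall>u\<in>rect_sites Q - inner_sites Q. \<sigma> u = \<sigma>' u" and loc: "is_local (rect_set Q) h"
  shows "tile_mean lam Q \<sigma> h = tile_mean lam Q \<sigma>' h"
proof -
  let ?\<phi> = "\<lambda>\<eta> u. if u \<in> inner_sites Q then \<eta> u else \<sigma>' u"
  let ?\<psi> = "\<lambda>\<eta> u. if u \<in> inner_sites Q then \<eta> u else \<sigma> u"
  have out: "\<eta> v = \<rho> v" if "\<eta> \<in> Omega_bc (rect_set Q) \<rho>" "v \<notin> inner_sites Q" for \<eta> \<rho> v
    using that unfolding Omega_bc_rect_iff by blast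
  have bij: "bij_betw ?\<phi> (Omega_bc (rect_set Q) \<sigma>) (Omega_bc (rect_set Q) \<sigma>')"
  proof (rule bij_betw_byWitness[where f' = ?\<psi>])
    show "?\<phi> ` Omega_bc (rect_set Q) \<sigma> \<subseteq> Omega_bc (rect_set Q) \<sigma>'"
      using replace_inside_in_Omega_bc[OF \<sigma>(2) _ bd] by blast
    have bd': "\<forall>u\<in>rect_sites Q - inner_sites Q. \<sigma>' u = \<sigma> u" using bd by simp
    show "?\<psi> ` Omega_bc (rect_set Q) \<sigma>' \<subseteq> Omega_bc (rect_set Q) \<sigma>"
      using replace_inside_in_Omega_bc[OF \<sigma>(1) _ bd'] by blast
    show "\<forall>\<eta>\<in>Omega_bc (rect_set Q) \<sigma>. ?\<psi> (?\<phi> \<eta>) = \<eta>"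
      using out[of _ \<sigma>] by (auto simp: fun_eq_iff)
    show "\<forall>\<eta>\<in>Omega_bc (rect_set Q) \<sigma>'. ?\<phi> (?\<psi> \<eta>) = \<eta>"
      using out[of _ \<sigma>'] by (auto simp: fun_eq_iff)
  qed
  have "lam ^ inner_tiles Q (?\<phi> \<eta>) = lam ^ inner_tiles Q \<eta>" "h (?\<phi> \<eta>) = h \<eta>"
    if \<eta>: "\<eta> \<in> Omega_bc (rect_set Q) \<sigma>" for \<eta>
  proof -
    show "lam ^ inner_tiles Q (?\<phi> \<eta>) = lam ^ inner_tiles Q \<eta>"
      by (intro arg_cong[where f = "(^) lam"] occupied_cong) simp
    show "h (?\<phi> \<eta>) = h \<eta>"
    proof (rule is_local_rectD[OF loc])
      show "?\<phi> \<eta> \<in> Omega" "\<eta> \<in> Omega"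
        using replace_inside_in_Omega_bc[OF \<sigma>(2) \<eta> bd] \<eta> Omega_bc_subset by blast+
      show "?\<phi> \<eta> u = \<eta> u" if "u \<in> rect_sites Q" for u using that bd out[OF \<eta>] by auto
    qed
  qed
  then show ?thesis
    unfolding tile_mean_def wmean_def
    by (simp add: sum.reindex_bij_betw[OF bij, symmetric] cong: sum.cong)
qed

lemma finite_range_local:
  assumes loc: "is_local (rect_set Q) f"
  shows "finite (f ` Omega)"
proof -
  have "f ` Omega \<subseteq> (\<lambda>B. f (\<lambda>u. u \<in> B)) ` Pow (rect_sites Q)"
  proof
    fix z assume "z \<in> f ` Omega"
    then obtain \<sigma> where \<sigma>: "\<sigma> \<in> Omega" "z = f \<sigma>" by blast
    let ?B = "{u \<in> rect_sites Q. \<sigma> u}"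
    have "(\<lambda>u. u \<in> ?B) \<in> Omega" using \<sigma>(1) unfolding Omega_iff by auto
    then have "f \<sigma> = f (\<lambda>u. u \<in> ?B)" by (rule is_local_rectD[OF loc \<sigma>(1)]) simp
    then show "z \<in> (\<lambda>B. f (\<lambda>u. u \<in> B)) ` Pow (rect_sites Q)" using \<sigma>(2) by blast
  qed
  then show ?thesis by (rule finite_subset) (simp add: finite_rect_sites)
qed

lemma bounded_rect_set: "bounded (rect_set Q)"
  by (cases Q) (simp add: rect_set_def bounded_Times compact_imp_bounded)

lemma sets_level_set:
  fixes f :: "config \<Rightarrow> real"
  assumes "f \<in> borel_measurable cfg_space"
  shows "{\<sigma> \<in> Omega. f \<sigma> = v} \<in> sets cfg_space"
proof -
  have "f -` {v} \<inter> space cfg_space \<in> sets cfg_space" using measurable_sets[OF assms] by simp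
  then have "Omega \<inter> (f -` {v} \<inter> space cfg_space) \<in> sets cfg_space" by (rule sets.Int[OF sets_Omega])
  then show ?thesis by (simp add: space_cfg_space Int_def conj_commute)
qed

lemma is_local_level_set:
  assumes "is_local A f"
  shows "is_local A (indicator {\<sigma> \<in> Omega. f \<sigma> = v} :: config \<Rightarrow> real)"
  unfolding is_local_def
proof (intro ballI impI)
  fix \<sigma> \<tau> assume "\<sigma> \<in> Omega" "\<tau> \<in> Omega" "\<forall>u. pt u \<in> A \<longrightarrow> \<sigma> u = \<tau> u"
  moreover from this have "f \<sigma> = f \<tau>" using assms unfolding is_local_def by blast
  ultimately show "indicator {\<sigma> \<in> Omega. f \<sigma> = v} \<sigma> = (indicator {\<sigma> \<in> Omega. f \<sigma> = v} \<tau> :: real)"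
    by (simp add: indicator_def)
qed

lemma tile_mean_cong: "(\<And>\<eta>. \<eta> \<in> Omega \<Longrightarrow> f \<eta> = g \<eta>) \<Longrightarrow> tile_mean lam Q \<rho> f = tile_mean lam Q \<rho> g"
  unfolding tile_mean_def wmean_def using Omega_bc_subset by (simp add: subset_iff cong: sum.cong)

context
  fixes lam :: real and \<mu> :: "config measure"
  assumes gibbs: "gibbs lam \<mu>"
begin

interpretation prob_space \<mu> using gibbs by (simp add: gibbs_def)

lemma gibbs_sets [measurable_cong]: "sets \<mu> = sets cfg_space"
  using gibbs by (simp add: gibbs_def)

lemma gibbs_space: "space \<mu> = UNIV"
  using sets_eq_imp_space_eq[OF gibbs_sets] by (simp add: space_cfg_space)

lemma gibbs_prob_Omega: "prob Omega = 1"
  using gibbs by (simp add: gibbs_def emeasure_eq_measure)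

lemma gibbs_sets_eq: "A \<in> sets cfg_space \<Longrightarrow> A \<in> events"
  using gibbs_sets by simp

lemma gibbs_integral_level_sets:
  assumes fm: "f \<in> borel_measurable cfg_space" and fin: "finite (f ` Omega)"
  shows "(\<integral>\<sigma>. f \<sigma> \<partial>\<mu>) = (\<Sum>v\<in>f ` Omega. v * prob {\<sigma> \<in> Omega. f \<sigma> = v})"
proof -
  have lvl: "{\<sigma> \<in> Omega. f \<sigma> = v} \<in> events" for v
    using sets_level_set[OF fm] by (simp add: gibbs_sets)
  have "AE \<sigma> in \<mu>. \<sigma> \<in> Omega"
    using AE_in_set_eq_1 gibbs_prob_Omega gibbs_sets_eq[OF sets_Omega] by simp
  then have "AE \<sigma> in \<mu>. f \<sigma> = (\<Sum>v\<in>f ` Omega. v * indicator {\<sigma> \<in> Omega. f \<sigma> = v} \<sigma>)"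
    by eventually_elim (simp add: sum_level_sets[OF fin])
  then have "(\<integral>\<sigma>. f \<sigma> \<partial>\<mu>) = (\<integral>\<sigma>. (\<Sum>v\<in>f ` Omega. v * indicator {\<sigma> \<in> Omega. f \<sigma> = v} \<sigma>) \<partial>\<mu>)"
    using lvl fm by (intro integral_cong_AE) (auto simp: measurable_cong_sets[OF gibbs_sets refl])
  also have "\<dots> = (\<Sum>v\<in>f ` Omega. v * prob {\<sigma> \<in> Omega. f \<sigma> = v})"
    using lvl by (simp add: integral_sum integrable_real_indicator emeasure_eq_measure)
  finally show ?thesis .
qed

lemma gibbs_prob_split_boundary_events:
  assumes "A \<in> sets cfg_space" "A \<subseteq> outer_hard_core Q"
  shows "prob A = (\<Sum>b \<in> Pow (rect_sites Q - inner_sites Q). prob (A \<inter> boundary_event Q b))"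
proof -
  have "A = (\<Union>b \<in> Pow (rect_sites Q - inner_sites Q). A \<inter> boundary_event Q b)"
    using assms(2) outer_hard_core_eq_boundary_events[of Q] by blast
  moreover have "prob (\<Union>b \<in> Pow (rect_sites Q - inner_sites Q). A \<inter> boundary_event Q b)
      = (\<Sum>b \<in> Pow (rect_sites Q - inner_sites Q). prob (A \<inter> boundary_event Q b))"
    using disjoint_boundary_events[of Q] sets.Int[OF assms(1) sets_boundary_event[of Q]] finite_rect_sites[of Q]
    by (intro finite_measure_finite_Union)
      (auto simp: gibbs_sets disjoint_family_on_def)
  ultimately show ?thesis by simp
qed

lemma gibbs_sum_prob_boundary_events:
  "(\<Sum>b \<in> Pow (rect_sites Q - inner_sites Q). prob (boundary_event Q b)) = 1"
proof -
  have ohc: "outer_hard_core Q \<in> sets cfg_space"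
    unfolding outer_hard_core_def by (rule sets_no_conflict)
  have "prob (outer_hard_core Q) = 1"
    using gibbs_prob_Omega finite_measure_mono[OF Omega_subset_outer_hard_core[of Q]] ohc
    by (intro antisym prob_le_1) (simp_all add: gibbs_sets)
  moreover have "outer_hard_core Q \<inter> boundary_event Q b = boundary_event Q b" for b
    unfolding boundary_event_def by blast
  ultimately show ?thesis using gibbs_prob_split_boundary_events[OF ohc order_refl] by simp
qed

text \<open>The DLR equation on a boundary event, where the specification is constant.\<close>
lemma gibbs_prob_Int_boundary_event:
  assumes E: "E \<in> sets cfg_space" "is_local (rect_set Q) (indicator E)"
    and \<sigma>: "\<sigma> \<in> boundary_event Q b"
  shows "prob (E \<inter> boundary_event Q b) = tile_mean lam Q \<sigma> (indicator E) * prob (boundary_event Q b)"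
proof -
  have "prob (E \<inter> boundary_event Q b) =
      (\<integral>\<tau>. indicator (boundary_event Q b) \<tau> * spec lam (rect_set Q) \<tau> E \<partial>\<mu>)"
    using gibbs E(1) outside_event_boundary_event bounded_rect_set unfolding gibbs_def by blast
  also have "\<dots> = (\<integral>\<tau>. tile_mean lam Q \<sigma> (indicator E) * indicator (boundary_event Q b) \<tau> \<partial>\<mu>)"
  proof (rule Bochner_Integration.integral_cong[OF refl])
    fix \<tau> show "indicator (boundary_event Q b) \<tau> * spec lam (rect_set Q) \<tau> E
        = tile_mean lam Q \<sigma> (indicator E) * indicator (boundary_event Q b) \<tau>"
      using \<sigma> tile_mean_boundary_invariant[OF _ _ _ E(2), of \<tau> \<sigma> lam]
      by (auto simp: indicator_def spec_rect_eq_tile_mean boundary_event_def)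
  qed
  also have "\<dots> = tile_mean lam Q \<sigma> (indicator E) * prob (boundary_event Q b)"
    using sets_boundary_event by (simp add: gibbs_sets)
  finally show ?thesis .
qed

lemma gibbs_boundary_event_meets_Omega:
  assumes "prob (boundary_event Q b) \<noteq> 0"
  shows "boundary_event Q b \<inter> Omega \<noteq> {}"
proof
  assume "boundary_event Q b \<inter> Omega = {}"
  then have "prob (boundary_event Q b) \<le> prob (space \<mu> - Omega)"
    using sets_boundary_event[of Q b] sets.compl_sets[OF sets_Omega]
    by (intro finite_measure_mono) (auto simp: gibbs_sets gibbs_space space_cfg_space)
  also have "\<dots> = 0" using prob_compl[OF gibbs_sets_eq[OF sets_Omega]] gibbs_prob_Omega by simp
  finally show False using assms measure_nonneg[of \<mu> "boundary_event Q b"] by simp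
qed

lemma gibbs_level_sets_boundary_event:
  assumes fm: "f \<in> borel_measurable cfg_space" and loc: "is_local (rect_set Q) f"
    and \<sigma>: "\<sigma> \<in> boundary_event Q b"
  shows "(\<Sum>v\<in>f ` Omega. v * prob ({\<eta> \<in> Omega. f \<eta> = v} \<inter> boundary_event Q b))
    = prob (boundary_event Q b) * tile_mean lam Q \<sigma> f"
proof -
  have "prob ({\<eta> \<in> Omega. f \<eta> = v} \<inter> boundary_event Q b)
      = tile_mean lam Q \<sigma> (indicator {\<eta> \<in> Omega. f \<eta> = v}) * prob (boundary_event Q b)" for v
    using sets_level_set[OF fm] is_local_level_set[OF loc] by (intro gibbs_prob_Int_boundary_event[OF _ _ \<sigma>])
  then have "(\<Sum>v\<in>f ` Omega. v * prob ({\<eta> \<in> Omega. f \<eta> = v} \<inter> boundary_event Q b))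
      = prob (boundary_event Q b) * tile_mean lam Q \<sigma> (\<lambda>\<eta>. \<Sum>v\<in>f ` Omega. v * indicator {\<eta> \<in> Omega. f \<eta> = v} \<eta>)"
    unfolding tile_mean_def wmean_sum[OF finite_range_local[OF loc]] by (simp add: sum_distrib_left mult_ac)
  also have "\<dots> = prob (boundary_event Q b) * tile_mean lam Q \<sigma> f"
    using sum_level_sets[OF finite_range_local[OF loc], of f Omega] by (simp cong: tile_mean_cong)
  finally show ?thesis .
qed

lemma gibbs_integral_boundary_events:
  assumes fm: "f \<in> borel_measurable cfg_space" and loc: "is_local (rect_set Q) f"
  shows "(\<integral>\<sigma>. f \<sigma> \<partial>\<mu>) = (\<Sum>b \<in> Pow (rect_sites Q - inner_sites Q).
    \<Sum>v\<in>f ` Omega. v * prob ({\<eta> \<in> Omega. f \<eta> = v} \<inter> boundary_event Q b))"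
proof -
  have "prob {\<eta> \<in> Omega. f \<eta> = v} = (\<Sum>b \<in> Pow (rect_sites Q - inner_sites Q).
      prob ({\<eta> \<in> Omega. f \<eta> = v} \<inter> boundary_event Q b))" for v
    using Omega_subset_outer_hard_core[of Q]
    by (intro gibbs_prob_split_boundary_events[OF sets_level_set[OF fm]]) auto
  then show ?thesis
    using gibbs_integral_level_sets[OF fm finite_range_local[OF loc]]
    by (simp add: sum_distrib_left sum.swap[of _ "f ` Omega"])
qed

lemma gibbs_mean_in_convex_hull:
  assumes fm: "f \<in> borel_measurable cfg_space" and loc: "is_local (rect_set Q) f"
  shows "(\<integral>\<sigma>. f \<sigma> \<partial>\<mu>) \<in> convex hull ((\<lambda>\<rho>. tile_mean lam Q \<rho> f) ` Omega)"
proof -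
  define B Bs where "B = boundary_event Q" and "Bs = Pow (rect_sites Q - inner_sites Q)"
  define I where "I = {b \<in> Bs. prob (B b) \<noteq> 0}"
  define rep where "rep b = (SOME \<sigma>. \<sigma> \<in> B b \<inter> Omega)" for b
  have finBs: "finite Bs" unfolding Bs_def using finite_rect_sites by simp
  have rep: "rep b \<in> B b \<inter> Omega" if "b \<in> I" for b
  proof -
    have "B b \<inter> Omega \<noteq> {}" using gibbs_boundary_event_meets_Omega that unfolding I_def B_def by blast
    then show ?thesis unfolding rep_def by (rule some_in_eq[THEN iffD2])
  qed
  have null: "prob ({\<eta> \<in> Omega. f \<eta> = v} \<inter> B b) = 0" if "b \<in> Bs - I" for b v
  proof -
    have "prob ({\<eta> \<in> Omega. f \<eta> = v} \<inter> B b) \<le> prob (B b)"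
      using sets_boundary_event[of Q b] by (intro finite_measure_mono) (auto simp: B_def gibbs_sets)
    moreover have "prob (B b) = 0" using that unfolding I_def by simp
    ultimately show ?thesis using measure_nonneg[of \<mu> "{\<eta> \<in> Omega. f \<eta> = v} \<inter> B b"] by linarith
  qed
  have "(\<integral>\<sigma>. f \<sigma> \<partial>\<mu>) = (\<Sum>b\<in>I. \<Sum>v\<in>f ` Omega. v * prob ({\<eta> \<in> Omega. f \<eta> = v} \<inter> B b))"
    unfolding gibbs_integral_boundary_events[OF fm loc] B_def[symmetric] Bs_def[symmetric]
    using finBs null by (intro sum.mono_neutral_right) (auto simp: I_def)
  also have "\<dots> = (\<Sum>b\<in>I. prob (B b) *\<^sub>R tile_mean lam Q (rep b) f)"
    using rep gibbs_level_sets_boundary_event[OF fm loc] unfolding B_def by (intro sum.cong) auto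
  also have "\<dots> \<in> convex hull ((\<lambda>\<rho>. tile_mean lam Q \<rho> f) ` Omega)"
  proof (rule convex_sum)
    have "(\<Sum>b\<in>I. prob (B b)) = (\<Sum>b\<in>Bs. prob (B b))"
      using finBs by (intro sum.mono_neutral_left) (auto simp: I_def)
    then show "(\<Sum>b\<in>I. prob (B b)) = 1"
      using gibbs_sum_prob_boundary_events unfolding B_def Bs_def by simp
    show "tile_mean lam Q (rep b) f \<in> convex hull ((\<lambda>\<rho>. tile_mean lam Q \<rho> f) ` Omega)" if "b \<in> I" for b
      using rep[OF that] by (auto intro: hull_inc)
  qed (use finBs in \<open>auto simp: I_def\<close>)
  finally show ?thesis .
qed

end

section \<open>Geometry of nested rectangles\<close>

lemma card_collar_le:
  assumes R': "R' = (x', y', K', L')" and pos: "K' > 0" "L' > 0"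
  shows "card (collar R') \<le> nat (6 * K' + 6 * L' + 36)"
proof -
  define S1 where "S1 = {x'-1..x'+1} \<times> {y'-1..y'+L'+1}"
  define S2 where "S2 = {x'+K'-1..x'+K'+1} \<times> {y'-1..y'+L'+1}"
  define S3 where "S3 = {x'-1..x'+K'+1} \<times> {y'-1..y'+1}"
  define S4 where "S4 = {x'-1..x'+K'+1} \<times> {y'+L'-1..y'+L'+1}"
  have "collar R' \<subseteq> S1 \<union> S2 \<union> S3 \<union> S4"
  proof
    fix u assume "u \<in> collar R'"
    then have bounds: "x'-1 \<le> fst u" "fst u \<le> x'+K'+1" "y'-1 \<le> snd u" "snd u \<le> y'+L'+1"
      and "\<not> (x'+2 \<le> fst u \<and> fst u \<le> x'+K'-2 \<and> y'+2 \<le> snd u \<and> snd u \<le> y'+L'-2)"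
      unfolding collar_def enlarged_sites_def core_sites_def R' by auto
    then consider "fst u \<le> x'+1" | "x'+K'-1 \<le> fst u" | "snd u \<le> y'+1" | "y'+L'-1 \<le> snd u"
      by linarith
    then show "u \<in> S1 \<union> S2 \<union> S3 \<union> S4"
      using bounds by cases (cases u, simp add: S1_def S2_def S3_def S4_def)+
  qed
  then have "card (collar R') \<le> card (S1 \<union> S2 \<union> S3 \<union> S4)"
    by (rule card_mono[rotated]) (simp add: S1_def S2_def S3_def S4_def)
  also have "\<dots> \<le> card S1 + card S2 + card S3 + card S4"
    using card_Un_le[of "S1 \<union> S2 \<union> S3" S4] card_Un_le[of "S1 \<union> S2" S3] card_Un_le[of S1 S2] by linarith
  also have "\<dots> = nat (6 * K' + 6 * L' + 36)"
    using pos by (simp add: S1_def S2_def S3_def S4_def card_cartesian_product nat_add_distrib nat_mult_distrib)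
  finally show ?thesis .
qed

lemma card_collar_le_perimeter:
  assumes "has_margin R R'" "is_rect R'"
  shows "card (collar R') \<le> 3 * nat (perimeter R)"
proof -
  obtain x y K L x' y' K' L' where R: "R = (x, y, K, L)" and R': "R' = (x', y', K', L')"
    by (cases R, cases R')
  then have "K' > 0" "L' > 0" "K' + 4 \<le> K" "L' + 4 \<le> L"
    using assms by (auto simp: is_rect_def has_margin_def)
  then show ?thesis
    using card_collar_le[OF R'] unfolding R perimeter_def width_def height_def by simp
qed

lemma setdist_has_margin:
  assumes R: "R = (x, y, K, L)" and R': "R' = (x', y', K', L')" and pos: "K' > 0" "L' > 0"
    and sub: "rect_set R' \<subseteq> rect_set R" and sd: "setdist (rect_set R') (- rect_set R) \<ge> 2"
  shows "has_margin R R'"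
proof -
  let ?r = "real_of_int"
  have far: "2 \<le> dist p q" if "p \<in> rect_set R'" "q \<notin> rect_set R" for p q
    using setdist_le_dist[of p "rect_set R'" q "- rect_set R"] that sd by simp
  have corners: "(?r x', ?r y') \<in> rect_set R'" "(?r (x' + K'), ?r (y' + L')) \<in> rect_set R'"
    using pos unfolding R' rect_set_def by auto
  then have inside: "x \<le> x'" "y \<le> y'" "x' + K' \<le> x + K" "y' + L' \<le> y + L"
    using sub unfolding R rect_set_def by auto
  \<comment> \<open>points half a unit outside the sides of \<open>R\<close>, facing corners of \<open>R'\<close>\<close>
  have "2 \<le> dist (?r x', ?r y') (?r x - 1/2, ?r y')" "2 \<le> dist (?r x', ?r y') (?r x', ?r y - 1/2)"
    "2 \<le> dist (?r (x' + K'), ?r (y' + L')) (?r (x + K) + 1/2, ?r (y' + L'))"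
    "2 \<le> dist (?r (x' + K'), ?r (y' + L')) (?r (x' + K'), ?r (y + L) + 1/2)"
    using far corners unfolding R rect_set_def by auto
  then show ?thesis
    using inside unfolding R R' has_margin_def by (simp add: dist_Pair_Pair dist_real_def)
qed

lemma tile_mean_comparison_perimeter:
  fixes lam :: real
  defines "C \<equiv> 1 / ((min lam (1/lam))^2 / 2)^3"
  assumes lam: "lam > 0" and m: "has_margin R R'" and R': "is_rect R'"
    and \<rho>: "\<rho> \<in> Omega" "\<rho>' \<in> Omega"
    and loc: "is_local (rect_set R') f" and f_nonneg: "\<forall>\<sigma>\<in>Omega. f \<sigma> \<ge> 0"
  shows "tile_mean lam R' \<rho>' f \<le> C ^ nat (perimeter R) * tile_mean lam R \<rho> f"
proof -
  define d where "d = (min lam (1/lam))^2 / 2"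
  have q: "0 < min lam (1/lam)" "min lam (1/lam) \<le> 1"
    using lam by (cases "lam \<le> 1"; simp add: min_le_iff_disj)+
  have d: "0 < d" "d \<le> 1"
    unfolding d_def using zero_less_power[OF q(1), of 2] power_le_one[OF less_imp_le[OF q(1)] q(2), of 2]
    by linarith+
  have "(d^3) ^ nat (perimeter R) \<le> d ^ card (collar R')"
    unfolding power_mult[symmetric] using d card_collar_le_perimeter[OF m R'] by (intro power_decreasing) auto
  moreover have "0 \<le> tile_mean lam R' \<rho>' f"
    unfolding tile_mean_def using f_nonneg lam Omega_bc_subset by (intro wmean_nonneg) auto
  ultimately have "(d^3) ^ nat (perimeter R) * tile_mean lam R' \<rho>' f \<le> tile_mean lam R \<rho> f"
    using tile_mean_comparison[OF lam m \<rho> loc f_nonneg] unfolding d_def[symmetric]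
    by (meson mult_right_mono order_trans)
  then show ?thesis
    using d unfolding C_def d_def[symmetric] by (simp add: power_one_over field_simps)
qed

lemma admissible_mean_in_convex_hull:
  assumes "lam > 0" "is_rect R" "E \<in> admissible_means lam R"
    and "f \<in> borel_measurable cfg_space" "is_local (rect_set R) f"
  shows "E f \<in> convex hull ((\<lambda>\<rho>. tile_mean lam R \<rho> f) ` Omega)"
proof -
  consider "E = per_mean lam R" | \<rho> where "\<rho> \<in> Omega" "E = bc_mean lam R \<rho>"
    | \<mu> where "gibbs lam \<mu>" "E = (\<lambda>f. \<integral>\<sigma>. f \<sigma> \<partial>\<mu>)"
    using assms(3) unfolding admissible_means_def by blast
  then show ?thesis
  proof cases
    case 1
    then show ?thesis using per_mean_in_convex_hull[OF assms(2,1,5)] by simp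
  next
    case (2 \<rho>)
    then show ?thesis using bc_mean_eq_tile_mean[OF assms(1)] by (auto intro: hull_inc)
  next
    case (3 \<mu>)
    then show ?thesis using gibbs_mean_in_convex_hull[OF 3(1) assms(4,5)] by simp
  qed
qed

theorem proposition2p2:
  fixes lam :: real
  assumes "lam > 0"
  shows "\<exists>C::real. \<forall>R R' f.
    is_rect R \<and> is_rect R' \<and> rect_set R' \<subseteq> rect_set R \<and>
    setdist (rect_set R') (- rect_set R) \<ge> 2 \<and>
    f \<in> borel_measurable cfg_space \<and> (\<forall>\<sigma>\<in>Omega. f \<sigma> \<ge> 0) \<and> is_local (rect_set R') f \<longrightarrow>
    (\<forall>E \<in> admissible_means lam R. \<forall>E' \<in> admissible_means lam R'.
        E' f \<le> C ^ nat (perimeter R) * E f)"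
proof (intro exI allI impI ballI)
  let ?C = "1 / ((min lam (1/lam))^2 / 2)^3"
  fix R R' f E E'
  assume H: "is_rect R \<and> is_rect R' \<and> rect_set R' \<subseteq> rect_set R \<and>
    setdist (rect_set R') (- rect_set R) \<ge> 2 \<and>
    f \<in> borel_measurable cfg_space \<and> (\<forall>\<sigma>\<in>Omega. f \<sigma> \<ge> 0) \<and> is_local (rect_set R') f"
    and E: "E \<in> admissible_means lam R" and E': "E' \<in> admissible_means lam R'"
  have m: "has_margin R R'"
    using H setdist_has_margin by (cases R, cases R') (auto simp: is_rect_def)
  have "is_local (rect_set R) f"
    using H is_local_mono[of "rect_set R'" "rect_set R"] by blast
  then have "E f \<in> convex hull ((\<lambda>\<rho>. tile_mean lam R \<rho> f) ` Omega)"
    using admissible_mean_in_convex_hull[OF assms _ E] H by blast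
  moreover have "E' f \<in> convex hull ((\<lambda>\<rho>. tile_mean lam R' \<rho> f) ` Omega)"
    using admissible_mean_in_convex_hull[OF assms _ E'] H by blast
  moreover have "0 < min lam (1/lam)" using assms by simp
  then have "?C ^ nat (perimeter R) > 0" by (simp del: min_less_iff_conj)
  ultimately show "E' f \<le> ?C ^ nat (perimeter R) * E f"
    using tile_mean_comparison_perimeter[OF assms m] H by (auto intro: convex_hull_real_comparison)
qed

end
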